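(* Let $\{n_1,n_2,\dots,n_k,1\}$ be a canonical sequence (for the measure $P$ below) with $k\ge2$. Then $n_1>n_2>n_3>\cdots>n_{k-1}\ge n_k=1$.
   Context: $P$ is the Borel probability measure on $\mathbb{R}$ with density $f(x)=(3/2)^m$ if $x\in J_m:=[1-\frac{1}{3^{m-1}},1-\frac{2}{3^m}]$ for some $m\in\mathbb{N}=\{1,2,\dots\}$, and $f(x)=0$ otherwise. An optimal set of $n$-means for $P$ is a set $\alpha$ with $\mathrm{card}(\alpha)\le n$ attaining $\inf\{\int\min_{a\in\alpha}(x-a)^2\,dP(x):\mathrm{card}(\alpha)\le n\}$. Canonical sequence: for $n\ge2$ and an optimal set $\alpha_n$ of $n$-means for $P$, there is a (unique) positive integer $k$ with $\alpha_n\cap J_j\neq\emptyset$ for $1\le j\le k$ and $\mathrm{card}(\alpha_n\cap[1-\frac{1}{3^k},1])=1$; with $n_j:=\mathrm{card}(\alpha_n\cap J_j)$ one has $n=n_1+\dots+n_k+1$, and the sequence $\{n_1,n_2,\dots,n_k,1\}$ is called the canonical sequence of order $n$ (associated with $\alpha_n$). *)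

theory Defs
  imports "HOL-Analysis.Analysis"
begin

definition J :: "nat \<Rightarrow> real set" where
  "J m = {1 - 1 / 3 ^ (m - 1) .. 1 - 2 / 3 ^ m}"

definition dens :: "real \<Rightarrow> real" where
  "dens x = (if \<exists>m\<ge>1. x \<in> J m
             then (3 / 2) ^ (THE m. m \<ge> 1 \<and> x \<in> J m) else 0)"

definition P :: "real measure" where
  "P = density lborel (\<lambda>x. ennreal (dens x))"

definition distortion :: "real set \<Rightarrow> ennreal" where
  "distortion \<alpha> = (\<integral>\<^sup>+ x. ennreal (Min ((\<lambda>a. (x - a)\<^sup>2) ` \<alpha>)) \<partial>P)"

definition optimal_n_means :: "nat \<Rightarrow> real set \<Rightarrow> bool" where
  "optimal_n_means n \<alpha> \<longleftrightarrow> finite \<alpha> \<and> \<alpha> \<noteq> {} \<and> card \<alpha> \<le> n \<and>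
     distortion \<alpha> = (INF \<beta>\<in>{\<beta>. finite \<beta> \<and> \<beta> \<noteq> {} \<and> card \<beta> \<le> n}. distortion \<beta>)"

end

theory Submission
  imports Defs
begin

text \<open>Since P has density (3/2)^m on J m, the distortion of a finite set is the convergent
  series of its local errors on the J m weighted by (3/2)^m, and an optimal set minimises this
  series among sets of at most n points. No point of an optimal set can be moved to a position
  that is closer on its whole Voronoi cell; this confines the points to [0, 1], makes each point
  the midpoint of the part of the support its cell covers, and rules out points in the gaps
  between consecutive J m. Hence an optimal set splits into blocks \<alpha> \<inter> J m (m \<le> k) and one
  tail point c in [1 - 3^(-k), 1]. On an interval of length L a block of m points has error at
  least L^3/(12 m^2), with equality for m equally spaced points, and the error of c on all J m
  with m > k is an explicit quadratic in c. The claimed shape of the canonical sequence then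
  follows from three exchanges, each of which would otherwise lower the cost: shifting a point
  from block j + 1 to block j; replacing the last block and c by m - 1 points, a midpoint and a
  better tail point; and replacing a singleton inner block, the last block and c by two points
  and a better tail point.\<close>

section \<open>The intervals J m and the density\<close>

text \<open>Indices are shifted by one: J (Suc i) = {J_lo i..J_hi i}. The number J_len i is
  both the length of this interval and the length of the gap that follows it.\<close>

definition J_lo :: "nat \<Rightarrow> real" where "J_lo i = 1 - 1/3^i"
definition J_hi :: "nat \<Rightarrow> real" where "J_hi i = 1 - 2/3^(Suc i)"
definition J_len :: "nat \<Rightarrow> real" where "J_len i = 1/3^(Suc i)"

lemma J_Suc_eq: "J (Suc i) = {J_lo i..J_hi i}"
  by (simp add: J_def J_lo_def J_hi_def)

lemma J_hi_eq: "J_hi i = J_lo i + J_len i"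
  by (simp add: J_lo_def J_hi_def J_len_def field_simps)

lemma J_lo_Suc: "J_lo (Suc i) = J_hi i + J_len i"
  by (simp add: J_lo_def J_hi_def J_len_def field_simps)

lemma J_len_Suc: "J_len (Suc i) = J_len i / 3"
  by (simp add: J_len_def)

lemma J_len_pos: "0 < J_len i"
  by (simp add: J_len_def)

lemma J_lo_less_J_hi: "J_lo i < J_hi i"
  using J_hi_eq J_len_pos by (metis less_add_same_cancel1)

lemma J_lo_nonneg: "0 \<le> J_lo i"
  by (simp add: J_lo_def)

lemma J_hi_less_1: "J_hi i < 1"
  by (simp add: J_hi_def)

lemma one_minus_J_lo: "1 - J_lo i = 3 * J_len i"
  by (simp add: J_lo_def J_len_def field_simps)

lemma J_lo_mono: "i \<le> i' \<Longrightarrow> J_lo i \<le> J_lo i'"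
  unfolding J_lo_def by (simp add: frac_le power_increasing)

lemma J_hi_mono: "i \<le> i' \<Longrightarrow> J_hi i \<le> J_hi i'"
  unfolding J_hi_def by (simp add: frac_le power_increasing del: power_Suc)

lemma J_len_antimono: "i \<le> i' \<Longrightarrow> J_len i' \<le> J_len i"
  unfolding J_len_def by (simp add: frac_le power_increasing del: power_Suc)

lemma J_hi_plus_len_le: "i < i' \<Longrightarrow> J_hi i + J_len i \<le> J_lo i'"
  using J_lo_Suc J_lo_mono by (metis Suc_leI)

lemma mem_J_le_J_hi: "x \<in> J (Suc i') \<Longrightarrow> i' \<le> i \<Longrightarrow> x \<le> J_hi i"
  using J_hi_mono J_Suc_eq by fastforce

lemma mem_J_ge_J_lo: "x \<in> J (Suc i') \<Longrightarrow> i \<le> i' \<Longrightarrow> J_lo i \<le> x"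
  using J_lo_mono J_Suc_eq by fastforce

lemma J_disjoint: "m \<ge> 1 \<Longrightarrow> m' \<ge> 1 \<Longrightarrow> m \<noteq> m' \<Longrightarrow> J m \<inter> J m' = {}"
proof -
  have "J (Suc i) \<inter> J (Suc i') = {}" if "i < i'" for i i'
    using J_hi_plus_len_le[OF that] J_len_pos[of i] unfolding J_Suc_eq by fastforce
  moreover assume "m \<ge> 1" "m' \<ge> 1" "m \<noteq> m'"
  ultimately show ?thesis
    by (metis Int_commute Suc_le_D One_nat_def Suc_less_SucD nat_neq_iff)
qed

lemma dens_eq_suminf:
  "ennreal (dens x) = (\<Sum>i. ennreal ((3/2)^(Suc i) * indicator (J (Suc i)) x))"
proof (cases "\<exists>m\<ge>1. x \<in> J m")
  case True
  then obtain i where xi: "x \<in> J (Suc i)" by (metis Suc_le_D One_nat_def)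
  have only_i: "x \<in> J (Suc j) \<longleftrightarrow> j = i" for j
    using xi J_disjoint[of "Suc j" "Suc i"] by auto
  have "(THE m. m \<ge> 1 \<and> x \<in> J m) = Suc i"
    using xi J_disjoint by (intro the_equality) fastforce+
  moreover have "(\<lambda>j. ennreal ((3/2)^(Suc j) * indicator (J (Suc j)) x)) =
      (\<lambda>j. if j = i then ennreal ((3/2)^(Suc i)) else 0)"
    using only_i by (auto simp: indicator_def fun_eq_iff)
  ultimately show ?thesis
    using True sums_unique[OF sums_single[of i "\<lambda>_. ennreal ((3/2)^(Suc i))"]]
    by (simp add: dens_def)
next
  case False
  hence "\<And>j. x \<notin> J (Suc j)" by auto
  thus ?thesis using False by (simp add: dens_def indicator_def)
qed

lemma J_lo_bracket: "0 \<le> a \<Longrightarrow> a < J_lo k \<Longrightarrow> \<exists>i<k. J_lo i \<le> a \<and> a < J_lo (Suc i)"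
proof (induction k)
  case 0 thus ?case by (simp add: J_lo_def)
next
  case (Suc k) thus ?case by (cases "a < J_lo k") (auto intro: less_SucI)
qed

section \<open>The distortion as a weighted series of local errors\<close>

definition nearest_sqdist :: "real set \<Rightarrow> real \<Rightarrow> real" where
  "nearest_sqdist A x = Min ((\<lambda>a. (x - a)\<^sup>2) ` A)"

definition weight :: "nat \<Rightarrow> real" where
  "weight m = (3/2)^m"

definition cell_err :: "real set \<Rightarrow> nat \<Rightarrow> real" where
  "cell_err A m = integral (J m) (nearest_sqdist A)"

definition cost :: "real set \<Rightarrow> real" where
  "cost A = (\<Sum>i. weight (Suc i) * cell_err A (Suc i))"

lemma weight_nonneg: "0 \<le> weight m"
  by (simp add: weight_def)

lemma nearest_sqdist_le: "finite A \<Longrightarrow> a \<in> A \<Longrightarrow> nearest_sqdist A x \<le> (x - a)\<^sup>2"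
  unfolding nearest_sqdist_def by (auto intro: Min_le)

lemma nearest_sqdist_attained:
  "finite A \<Longrightarrow> A \<noteq> {} \<Longrightarrow> \<exists>a\<in>A. nearest_sqdist A x = (x - a)\<^sup>2"
proof -
  assume "finite A" "A \<noteq> {}"
  hence "Min ((\<lambda>a. (x - a)\<^sup>2) ` A) \<in> (\<lambda>a. (x - a)\<^sup>2) ` A" by (intro Min_in) auto
  thus ?thesis unfolding nearest_sqdist_def by auto
qed

lemma nearest_sqdist_nonneg: "finite A \<Longrightarrow> A \<noteq> {} \<Longrightarrow> 0 \<le> nearest_sqdist A x"
  by (metis nearest_sqdist_attained zero_le_power2)

lemma nearest_sqdist_greatest:
  "finite A \<Longrightarrow> A \<noteq> {} \<Longrightarrow> (\<And>a. a \<in> A \<Longrightarrow> c \<le> (x - a)\<^sup>2) \<Longrightarrow> c \<le> nearest_sqdist A x"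
  by (metis nearest_sqdist_attained)

lemma nearest_sqdist_antimono:
  "finite B \<Longrightarrow> A \<subseteq> B \<Longrightarrow> A \<noteq> {} \<Longrightarrow> nearest_sqdist B x \<le> nearest_sqdist A x"
  by (metis nearest_sqdist_attained nearest_sqdist_le finite_subset subsetD)

lemma nearest_sqdist_singleton: "nearest_sqdist {a} x = (x - a)\<^sup>2"
  by (simp add: nearest_sqdist_def)

lemma continuous_on_nearest_sqdist:
  "finite A \<Longrightarrow> A \<noteq> {} \<Longrightarrow> continuous_on S (nearest_sqdist A)"
proof (induction A rule: finite_ne_induct)
  case (singleton a)
  thus ?case unfolding nearest_sqdist_singleton[abs_def] by (intro continuous_intros)
next
  case (insert a A)
  have "nearest_sqdist (insert a A) = (\<lambda>x. min ((x - a)\<^sup>2) (nearest_sqdist A x))"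
    using insert.hyps by (auto simp: nearest_sqdist_def fun_eq_iff)
  thus ?case using insert by (auto intro!: continuous_intros)
qed

lemma integrable_nearest_sqdist:
  "finite A \<Longrightarrow> A \<noteq> {} \<Longrightarrow> nearest_sqdist A integrable_on {l..r}"
  by (intro integrable_continuous_real continuous_on_nearest_sqdist)

lemma cell_err_nonneg: "finite A \<Longrightarrow> A \<noteq> {} \<Longrightarrow> 0 \<le> cell_err A m"
  unfolding cell_err_def J_def
  by (intro integral_nonneg integrable_nearest_sqdist nearest_sqdist_nonneg)

lemma cell_err_mono:
  assumes "finite A" "A \<noteq> {}" "finite B" "B \<noteq> {}"
    and "\<And>x. x \<in> J (Suc i) \<Longrightarrow> nearest_sqdist B x \<le> nearest_sqdist A x"
  shows "cell_err B (Suc i) \<le> cell_err A (Suc i)"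
  unfolding cell_err_def J_Suc_eq using assms
  by (intro integral_le integrable_nearest_sqdist) (auto simp: J_Suc_eq)

lemma cell_err_strict_mono:
  assumes A: "finite A" "A \<noteq> {}" and B: "finite B" "B \<noteq> {}"
    and le: "\<And>x. x \<in> J (Suc i) \<Longrightarrow> nearest_sqdist B x \<le> nearest_sqdist A x"
    and x0: "x0 \<in> J (Suc i)" "nearest_sqdist B x0 < nearest_sqdist A x0"
  shows "cell_err B (Suc i) < cell_err A (Suc i)"
proof -
  let ?d = "\<lambda>x. nearest_sqdist A x - nearest_sqdist B x"
  have cont: "continuous_on {J_lo i..J_hi i} ?d"
    using A B by (intro continuous_intros continuous_on_nearest_sqdist)
  have nonneg: "\<And>x. x \<in> {J_lo i..J_hi i} \<Longrightarrow> 0 \<le> ?d x"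
    using le by (simp add: J_Suc_eq)
  have "integral {J_lo i..J_hi i} ?d \<noteq> 0"
    using integral_eq_0_iff[OF cont J_lo_less_J_hi nonneg] x0 by (auto simp: J_Suc_eq)
  moreover have "0 \<le> integral {J_lo i..J_hi i} ?d"
    using nonneg by (intro integral_nonneg integrable_continuous_real cont) auto
  moreover have "integral {J_lo i..J_hi i} ?d = cell_err A (Suc i) - cell_err B (Suc i)"
    unfolding cell_err_def J_Suc_eq using A B by (intro integral_diff integrable_nearest_sqdist)
  ultimately show ?thesis by linarith
qed

lemma cell_err_le:
  assumes "finite A" "a \<in> A"
  shows "cell_err A (Suc i) \<le> (1 + \<bar>a\<bar>)\<^sup>2 / 3^(Suc i)"
proof -
  have "cell_err A (Suc i) \<le> integral {J_lo i..J_hi i} (\<lambda>x. (1 + \<bar>a\<bar>)\<^sup>2)"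
    unfolding cell_err_def J_Suc_eq
  proof (rule integral_le)
    fix x assume "x \<in> {J_lo i..J_hi i}"
    hence "0 \<le> x" "x \<le> 1" using J_lo_nonneg[of i] J_hi_less_1[of i] by auto
    hence "\<bar>x - a\<bar> \<le> 1 + \<bar>a\<bar>" by auto
    hence "(x - a)\<^sup>2 \<le> (1 + \<bar>a\<bar>)\<^sup>2" by (metis abs_ge_zero power2_abs power_mono)
    thus "nearest_sqdist A x \<le> (1 + \<bar>a\<bar>)\<^sup>2" using nearest_sqdist_le[OF assms] by (meson order_trans)
  qed (use assms in \<open>auto intro: integrable_nearest_sqdist\<close>)
  also have "\<dots> = (1 + \<bar>a\<bar>)\<^sup>2 / 3^(Suc i)"
    using J_lo_less_J_hi[of i] J_hi_eq[of i] by (simp add: J_len_def)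
  finally show ?thesis .
qed

lemma summable_cost:
  assumes "finite A" "A \<noteq> {}"
  shows "summable (\<lambda>i. weight (Suc i) * cell_err A (Suc i))"
proof -
  obtain a where a: "a \<in> A" using assms by auto
  show ?thesis
  proof (rule summable_comparison_test')
    show "summable (\<lambda>i. (1 + \<bar>a\<bar>)\<^sup>2 * (1/2)^(Suc i))"
      by (intro summable_mult summable_geometric_iff[THEN iffD2]) auto
    fix i
    have "norm (weight (Suc i) * cell_err A (Suc i)) = weight (Suc i) * cell_err A (Suc i)"
      using cell_err_nonneg[OF assms] weight_nonneg by simp
    also have "\<dots> \<le> weight (Suc i) * ((1 + \<bar>a\<bar>)\<^sup>2 / 3^(Suc i))"
      using cell_err_le[OF assms(1) a] weight_nonneg by (intro mult_left_mono)
    also have "\<dots> = (1 + \<bar>a\<bar>)\<^sup>2 * (1/2)^(Suc i)"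
      by (simp add: weight_def power_divide)
    finally show "norm (weight (Suc i) * cell_err A (Suc i)) \<le> (1 + \<bar>a\<bar>)\<^sup>2 * (1/2)^(Suc i)" .
  qed
qed

lemma nn_integral_weighted_cell:
  assumes "finite A" "A \<noteq> {}"
  shows "(\<integral>\<^sup>+ x. ennreal ((3/2)^(Suc i) * indicator (J (Suc i)) x) * ennreal (nearest_sqdist A x) \<partial>lborel)
       = ennreal (weight (Suc i) * cell_err A (Suc i))"
proof -
  have meas: "nearest_sqdist A \<in> borel_measurable borel"
    using assms by (intro borel_measurable_continuous_onI continuous_on_nearest_sqdist)
  have int: "(nearest_sqdist A has_integral cell_err A (Suc i)) (J (Suc i))"
    unfolding cell_err_def J_Suc_eq using assms
    by (intro integrable_integral integrable_nearest_sqdist)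
  have "(\<integral>\<^sup>+ x. ennreal ((3/2)^(Suc i) * indicator (J (Suc i)) x) * ennreal (nearest_sqdist A x) \<partial>lborel)
      = (\<integral>\<^sup>+ x. ennreal ((3/2)^(Suc i)) * ennreal (indicator (J (Suc i)) x * nearest_sqdist A x) \<partial>lborel)"
    using nearest_sqdist_nonneg[OF assms]
    by (intro nn_integral_cong) (simp add: ennreal_mult' indicator_def)
  also have "\<dots> = ennreal ((3/2)^(Suc i)) * (\<integral>\<^sup>+ x. ennreal (indicator (J (Suc i)) x * nearest_sqdist A x) \<partial>lborel)"
    using meas by (intro nn_integral_cmult) (unfold J_def, measurable)
  also have "(\<integral>\<^sup>+ x. ennreal (indicator (J (Suc i)) x * nearest_sqdist A x) \<partial>lborel) = ennreal (cell_err A (Suc i))"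
    using nearest_sqdist_nonneg[OF assms] by (intro nn_integral_has_integral_lebesgue[OF _ int])
  also have "ennreal ((3/2)^(Suc i)) * ennreal (cell_err A (Suc i)) = ennreal (weight (Suc i) * cell_err A (Suc i))"
    unfolding weight_def by (rule ennreal_mult[symmetric]) (auto simp: cell_err_nonneg[OF assms])
  finally show ?thesis .
qed

lemma distortion_eq_cost:
  assumes "finite A" "A \<noteq> {}"
  shows "distortion A = ennreal (cost A)"
proof -
  have meas_i: "\<And>i. (\<lambda>x. ennreal ((3/2)^(Suc i) * indicator (J (Suc i)) x)) \<in> borel_measurable lborel"
    unfolding J_def by measurable
  have "nearest_sqdist A \<in> borel_measurable borel"
    using assms by (intro borel_measurable_continuous_onI continuous_on_nearest_sqdist)
  hence meas: "(\<lambda>x. ennreal (nearest_sqdist A x)) \<in> borel_measurable lborel" by measurable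
  have "distortion A = (\<integral>\<^sup>+ x. ennreal (nearest_sqdist A x) \<partial>P)"
    by (simp add: distortion_def nearest_sqdist_def)
  also have "\<dots> = (\<integral>\<^sup>+ x. (\<Sum>i. ennreal ((3/2)^(Suc i) * indicator (J (Suc i)) x)) * ennreal (nearest_sqdist A x) \<partial>lborel)"
    unfolding P_def dens_eq_suminf using meas_i by (intro nn_integral_density[OF _ meas]) simp
  also have "\<dots> = (\<integral>\<^sup>+ x. (\<Sum>i. ennreal ((3/2)^(Suc i) * indicator (J (Suc i)) x) * ennreal (nearest_sqdist A x)) \<partial>lborel)"
    by simp
  also have "\<dots> = (\<Sum>i. \<integral>\<^sup>+ x. ennreal ((3/2)^(Suc i) * indicator (J (Suc i)) x) * ennreal (nearest_sqdist A x) \<partial>lborel)"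
    by (rule nn_integral_suminf) (use meas_i meas in measurable)
  also have "\<dots> = (\<Sum>i. ennreal (weight (Suc i) * cell_err A (Suc i)))"
    using nn_integral_weighted_cell[OF assms] by simp
  also have "\<dots> = ennreal (cost A)" unfolding cost_def
    using cell_err_nonneg[OF assms] weight_nonneg summable_cost[OF assms]
    by (intro suminf_ennreal2) auto
  finally show ?thesis .
qed

lemma optimal_cost_le:
  assumes "optimal_n_means n \<alpha>" "finite \<beta>" "\<beta> \<noteq> {}" "card \<beta> \<le> n"
  shows "cost \<alpha> \<le> cost \<beta>"
proof -
  have \<alpha>: "finite \<alpha>" "\<alpha> \<noteq> {}" using assms(1) unfolding optimal_n_means_def by auto
  have "distortion \<alpha> \<le> distortion \<beta>" using assms unfolding optimal_n_means_def
    by (metis (mono_tags, lifting) INF_lower mem_Collect_eq)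
  moreover have "0 \<le> cost \<beta>" unfolding cost_def
    using cell_err_nonneg[OF assms(2,3)] weight_nonneg
    by (intro suminf_nonneg summable_cost assms(2,3) mult_nonneg_nonneg)
  ultimately show ?thesis using distortion_eq_cost[OF \<alpha>] distortion_eq_cost[OF assms(2,3)]
    by (simp add: ennreal_le_iff)
qed

lemma cost_less:
  assumes A: "finite A" "A \<noteq> {}" and B: "finite B" "B \<noteq> {}" and I: "finite I"
    and le: "\<And>i. i \<notin> I \<Longrightarrow> cell_err B (Suc i) \<le> cell_err A (Suc i)"
    and gain: "0 < (\<Sum>i\<in>I. weight (Suc i) * (cell_err A (Suc i) - cell_err B (Suc i)))"
  shows "cost B < cost A"
proof -
  let ?g = "\<lambda>i. weight (Suc i) * cell_err A (Suc i) - weight (Suc i) * cell_err B (Suc i)"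
  have sg: "summable ?g" by (intro summable_diff summable_cost A B)
  have "cost A - cost B = suminf ?g" unfolding cost_def by (intro suminf_diff summable_cost A B)
  moreover have "sum ?g I \<le> suminf ?g"
    using le weight_nonneg by (intro sum_le_suminf[OF sg I]) (auto simp: algebra_simps mult_left_mono)
  moreover have "sum ?g I = (\<Sum>i\<in>I. weight (Suc i) * (cell_err A (Suc i) - cell_err B (Suc i)))"
    by (simp add: algebra_simps)
  ultimately show ?thesis using gain by linarith
qed

definition cost_from :: "real set \<Rightarrow> nat \<Rightarrow> real" where
  "cost_from A N = (\<Sum>j. weight (Suc (j + N)) * cell_err A (Suc (j + N)))"

lemma cost_split:
  assumes "finite A" "A \<noteq> {}"
  shows "cost A = (\<Sum>i<N. weight (Suc i) * cell_err A (Suc i)) + cost_from A N"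
  unfolding cost_def cost_from_def using suminf_split_initial_segment[OF summable_cost[OF assms], of N] by simp

lemma cost_from_Suc:
  assumes "finite A" "A \<noteq> {}"
  shows "cost_from A N = weight (Suc N) * cell_err A (Suc N) + cost_from A (Suc N)"
  unfolding cost_from_def using suminf_split_head[OF summable_ignore_initial_segment[OF summable_cost[OF assms], of N]]
  by (simp add: algebra_simps)

lemma cost_from_mono:
  assumes "finite A" "A \<noteq> {}" "finite B" "B \<noteq> {}"
    and "\<And>j. cell_err B (Suc (j + N)) \<le> cell_err A (Suc (j + N))"
  shows "cost_from B N \<le> cost_from A N"
  unfolding cost_from_def using assms weight_nonneg
  by (intro suminf_le summable_ignore_initial_segment[OF summable_cost, simplified] mult_left_mono)

section \<open>Quantization of an interval\<close>

lemma sq_less_sq_iff: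
  "((x::real) - a)\<^sup>2 < (x - b)\<^sup>2 \<longleftrightarrow> (b < a \<and> (a + b)/2 < x) \<or> (a < b \<and> x < (a + b)/2)"
proof -
  have "(x - b)\<^sup>2 - (x - a)\<^sup>2 = (a - b) * (2*x - a - b)" by (simp add: power2_eq_square algebra_simps)
  hence "(x - a)\<^sup>2 < (x - b)\<^sup>2 \<longleftrightarrow> 0 < (a - b) * (2*x - a - b)" by linarith
  thus ?thesis unfolding zero_less_mult_iff by auto
qed

lemma sq_le_sq_of_dist: "\<bar>(x::real) - y\<bar> \<le> d \<Longrightarrow> d \<le> \<bar>x - a\<bar> \<Longrightarrow> (x - y)\<^sup>2 \<le> (x - a)\<^sup>2"
  by (metis abs_le_square_iff order_trans)

definition sq_integral :: "real \<Rightarrow> real \<Rightarrow> real \<Rightarrow> real" where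
  "sq_integral s t p = ((t - p)^3 - (s - p)^3) / 3"

lemma integral_sq:
  fixes s t p :: real
  assumes "s \<le> t"
  shows "integral {s..t} (\<lambda>x. (x - p)\<^sup>2) = sq_integral s t p"
proof -
  have "((\<lambda>x. (x - p)\<^sup>2) has_integral ((t - p)^3/3 - (s - p)^3/3)) {s..t}"
  proof (rule fundamental_theorem_of_calculus[OF assms])
    fix x assume "x \<in> {s..t}"
    have "((\<lambda>x. (x - p)^3/3) has_real_derivative (x - p)\<^sup>2) (at x within {s..t})"
      by (auto intro!: derivative_eq_intros simp: power2_eq_square)
    thus "((\<lambda>x. (x - p)^3/3) has_vector_derivative (x - p)\<^sup>2) (at x within {s..t})"
      by (simp add: has_real_derivative_iff_has_vector_derivative)
  qed
  thus ?thesis by (simp add: integral_unique sq_integral_def diff_divide_distrib)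
qed

lemma sq_integral_ge: "l \<le> r \<Longrightarrow> (r - l)^3/12 \<le> sq_integral l r a"
proof -
  assume "l \<le> r"
  moreover have "sq_integral l r a - (r - l)^3/12 = (r - l) * (a - (l + r)/2)\<^sup>2"
    by (simp add: sq_integral_def power2_eq_square power3_eq_cube field_simps)
  ultimately show ?thesis by (smt (verit) zero_le_mult_iff zero_le_power2)
qed

lemma sq_integral_midpoint: "sq_integral l r ((l + r)/2) = (r - l)^3/12"
  unfolding sq_integral_def by (simp add: power3_eq_cube field_simps)

lemma integral_le_plus_piece:
  fixes f g q :: "real \<Rightarrow> real"
  assumes cf: "continuous_on {l..r} f" and cg: "continuous_on {l..r} g"
    and cq: "continuous_on {s..t} q" and ord: "l \<le> s" "s \<le> t" "t \<le> r"
    and pt: "\<And>x. x \<in> {l..r} \<Longrightarrow> x \<noteq> s \<Longrightarrow> x \<noteq> t \<Longrightarrow>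
               f x \<le> g x + (if x \<in> {s..t} then q x else 0)"
  shows "integral {l..r} f \<le> integral {l..r} g + integral {s..t} q"
proof -
  define G where "G x = g x + (if x \<in> {s..t} then q x else 0)" for x
  define F where "F x = (if x \<in> {s,t} then G x else f x)" for x
  have iq: "(\<lambda>x. if x \<in> {s..t} then q x else 0) integrable_on {l..r}"
  proof -
    have "q integrable_on ({s..t} \<inter> {l..r})" using ord cq
      by (metis inf.absorb_iff1 atLeastatMost_subset_iff integrable_continuous_real)
    thus ?thesis using integrable_restrict_Int by blast
  qed
  have ig: "g integrable_on {l..r}" using cg by (rule integrable_continuous_real)
  have iG: "G integrable_on {l..r}" unfolding G_def by (rule integrable_add[OF ig iq])
  have if_: "f integrable_on {l..r}" using cf by (rule integrable_continuous_real)
  have iF: "F integrable_on {l..r}"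
    by (rule integrable_spike_finite[of "{s,t}" _ _ f]) (auto simp: F_def if_)
  have "integral {l..r} f = integral {l..r} F"
    by (rule integral_spike[of "{s,t}"]) (auto simp: F_def)
  also have "\<dots> \<le> integral {l..r} G"
    using pt by (intro integral_le iF iG) (auto simp: F_def G_def)
  also have "\<dots> = integral {l..r} g + integral {l..r} (\<lambda>x. if x \<in> {s..t} then q x else 0)"
    unfolding G_def by (rule integral_add[OF ig iq])
  also have "integral {l..r} (\<lambda>x. if x \<in> {s..t} then q x else 0) = integral {s..t} q"
  proof -
    have "{s..t} \<inter> {l..r} = {s..t}" using ord by auto
    thus ?thesis using integral_restrict_Int[of "{l..r}" "{s..t}" q] by metis
  qed
  finally show ?thesis .
qed

lemma cube_split_ineq:
  fixes m s L :: real
  assumes m: "1 \<le> m" and s: "0 \<le> s" "s \<le> L"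
  shows "L^3/(m + 1)\<^sup>2 \<le> s^3/m\<^sup>2 + (L - s)^3"
proof -
  have factor: "s^3*(m+1)^2 + (L-s)^3*m^2*(m+1)^2 - L^3*m^2
      = (s*(m+1) - L*m)^2 * (s*(1 - m^2) + L*m*(m+2))"
    by (simp add: power2_eq_square power3_eq_cube algebra_simps)
  have "L * (1 - m^2) \<le> s * (1 - m^2)"
    using s(2) m by (intro mult_right_mono_neg) (auto simp: one_le_power)
  moreover have "L * (1 - m^2) + L*m*(m+2) = L * (1 + 2*m)"
    by (simp add: algebra_simps power2_eq_square)
  moreover have "0 \<le> L * (1 + 2*m)" using s m by simp
  ultimately have "0 \<le> s*(1 - m^2) + L*m*(m+2)" by linarith
  hence "L^3*m^2 \<le> s^3*(m+1)^2 + (L-s)^3*m^2*(m+1)^2" using factor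
    by (metis diff_ge_0_iff_ge zero_le_mult_iff zero_le_power2)
  thus ?thesis using m by (simp add: field_simps)
qed

lemma nearest_sqdist_right_of_midpoint:
  assumes A: "finite A" "a \<in> A" and below: "\<And>c. c \<in> A \<Longrightarrow> c \<noteq> a \<Longrightarrow> c \<le> b"
    and ba: "b < a" and x: "(a + b)/2 \<le> x"
  shows "(x - a)\<^sup>2 \<le> nearest_sqdist A x"
proof (rule nearest_sqdist_greatest)
  fix c assume "c \<in> A"
  hence "c = a \<or> c \<le> b" using below by blast
  hence "\<bar>x - a\<bar> \<le> \<bar>x - c\<bar>" using x ba by (auto simp: abs_le_iff)
  thus "(x - a)\<^sup>2 \<le> (x - c)\<^sup>2" by (simp add: abs_le_square_iff)
qed (use A in auto)

lemma nearest_sqdist_left_of_midpoint: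
  assumes A: "finite A" "b \<in> A" and ba: "b < a" and x: "x \<le> (a + b)/2"
  shows "nearest_sqdist (A - {a}) x \<le> nearest_sqdist A x"
proof -
  obtain c where c: "c \<in> A" "nearest_sqdist A x = (x - c)\<^sup>2"
    using nearest_sqdist_attained[of A x] A by blast
  have "(x - b)\<^sup>2 \<le> (x - a)\<^sup>2"
    using x ba by (intro sq_le_sq_of_dist[of x b "\<bar>x - b\<bar>"]) (auto simp: abs_le_iff)
  moreover have "nearest_sqdist (A - {a}) x \<le> (x - d)\<^sup>2" if "d \<in> A" "d \<noteq> a" for d
    using A that by (intro nearest_sqdist_le) auto
  ultimately show ?thesis using c A ba by (cases "c = a") force+
qed

text \<open>Split [l, r] at the midpoint t of the two largest points a > b: right of t the point a
  is nearest, left of t the remaining points do at least as well as A.\<close>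

lemma quantization_lower_bound_step:
  assumes A: "finite A" "a \<in> A" "b \<in> A" "b < a" "\<And>c. c \<in> A \<Longrightarrow> c \<noteq> a \<Longrightarrow> c \<le> b"
    and m: "1 \<le> m" and lr: "l \<le> r"
    and rest_bound: "\<And>u v. u \<le> v \<Longrightarrow>
      (v - u)^3/(12 * (real m)\<^sup>2) \<le> integral {u..v} (nearest_sqdist (A - {a}))"
  shows "(r - l)^3/(12 * (real (Suc m))\<^sup>2) \<le> integral {l..r} (nearest_sqdist A)"
proof -
  define t where "t = (a + b)/2"
  have A': "finite (A - {a})" "A - {a} \<noteq> {}" using A by auto
  have int: "\<And>B u v. finite B \<Longrightarrow> B \<noteq> {} \<Longrightarrow> nearest_sqdist B integrable_on {u..v}"
    by (rule integrable_nearest_sqdist)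
  have right: "(v - u)^3/12 \<le> integral {u..v} (nearest_sqdist A)" if "t \<le> u" "u \<le> v" for u v
  proof -
    have "integral {u..v} (\<lambda>x. (x - a)\<^sup>2) \<le> integral {u..v} (nearest_sqdist A)"
      using nearest_sqdist_right_of_midpoint[OF A(1,2) A(5) A(4)] that A
      by (intro integral_le int integrable_continuous_real continuous_intros) (auto simp: t_def)
    thus ?thesis using sq_integral_ge[OF that(2), of a] integral_sq[OF that(2), of a] by linarith
  qed
  have left: "(v - u)^3/(12 * (real m)\<^sup>2) \<le> integral {u..v} (nearest_sqdist A)"
    if "v \<le> t" "u \<le> v" for u v
  proof -
    have "integral {u..v} (nearest_sqdist (A - {a})) \<le> integral {u..v} (nearest_sqdist A)"
      using nearest_sqdist_left_of_midpoint[OF A(1,3,4)] that A A'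
      by (intro integral_le int) (auto simp: t_def)
    thus ?thesis using rest_bound[OF that(2)] by linarith
  qed
  have L: "0 \<le> (r - l)^3" using lr by simp
  consider "t \<le> l" | "r \<le> t" | "l < t" "t < r" by linarith
  thus ?thesis
  proof cases
    case 1
    moreover have "(r - l)^3/(12 * (real (Suc m))\<^sup>2) \<le> (r - l)^3/12"
      using L by (intro divide_left_mono) (auto simp: one_le_power)
    ultimately show ?thesis using right[of l r] lr by linarith
  next
    case 2
    moreover have "(r - l)^3/(12 * (real (Suc m))\<^sup>2) \<le> (r - l)^3/(12 * (real m)\<^sup>2)"
      using m L by (intro divide_left_mono mult_left_mono power_mono) auto
    ultimately show ?thesis using left[of r l] lr by linarith
  next
    case 3
    have "(r - l)^3/(real m + 1)\<^sup>2 \<le> (t - l)^3/(real m)\<^sup>2 + ((r - l) - (t - l))^3"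
      using m 3 by (intro cube_split_ineq) auto
    hence "(r - l)^3/(12 * (real (Suc m))\<^sup>2) \<le> (t - l)^3/(12 * (real m)\<^sup>2) + (r - t)^3/12"
      by (simp add: field_simps)
    moreover have "integral {l..r} (nearest_sqdist A)
        = integral {l..t} (nearest_sqdist A) + integral {t..r} (nearest_sqdist A)"
      using 3 A by (intro Henstock_Kurzweil_Integration.integral_combine[symmetric] int) auto
    ultimately show ?thesis using left[of t l] right[of t r] 3 by linarith
  qed
qed

lemma quantization_lower_bound:
  assumes "finite A" "A \<noteq> {}" "card A \<le> m" "l \<le> r"
  shows "(r - l)^3/(12 * (real m)\<^sup>2) \<le> integral {l..r} (nearest_sqdist A)"
  using assms
proof (induction m arbitrary: A l r)
  case 0 thus ?case by auto
next
  case (Suc m)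
  have "card A \<noteq> 0" using Suc.prems by simp
  hence "card A \<le> m \<and> 1 \<le> m \<or> card A = 1 \<or> card A = Suc m \<and> 1 \<le> m"
    using Suc.prems(3) by linarith
  then consider "card A \<le> m" "1 \<le> m" | "card A = 1" | "card A = Suc m" "1 \<le> m" by blast
  thus ?case
  proof cases
    case 1
    have "(r - l)^3/(12 * (real (Suc m))\<^sup>2) \<le> (r - l)^3/(12 * (real m)\<^sup>2)"
      using 1 Suc.prems by (intro divide_left_mono mult_left_mono power_mono) auto
    thus ?thesis using Suc.IH[of A l r] Suc.prems 1 by linarith
  next
    case 2
    then obtain a where "A = {a}" by (metis card_1_singletonE)
    moreover have "(r - l)^3/(12 * (real (Suc m))\<^sup>2) \<le> (r - l)^3/12"
      using Suc.prems by (intro divide_left_mono) (auto simp: one_le_power)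
    ultimately show ?thesis using sq_integral_ge[of l r a] integral_sq[of l r a] Suc.prems
      by (simp add: nearest_sqdist_singleton[abs_def])
  next
    case 3
    define a where "a = Max A"
    define b where "b = Max (A - {a})"
    have a: "a \<in> A" "\<And>c. c \<in> A \<Longrightarrow> c \<le> a" unfolding a_def using Suc.prems by auto
    have "card (A - {a}) = m" using Suc.prems 3 a by (simp add: card_Diff_singleton)
    hence A': "finite (A - {a})" "A - {a} \<noteq> {}" "card (A - {a}) \<le> m"
      using Suc.prems 3 by (metis finite_Diff card.empty not_one_le_zero order_refl)+
    have "b \<in> A - {a}" unfolding b_def using A' by (intro Max_in)
    hence b: "b \<in> A" "b < a" using a(2) by force+
    have b_max: "\<And>c. c \<in> A \<Longrightarrow> c \<noteq> a \<Longrightarrow> c \<le> b" unfolding b_def using A' by (intro Max_ge) auto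
    show ?thesis
    proof (rule quantization_lower_bound_step[OF Suc.prems(1) a(1) b _ 3(2) Suc.prems(4)])
      show "c \<le> b" if "c \<in> A" "c \<noteq> a" for c using b_max that .
      show "(v - u)^3/(12 * (real m)\<^sup>2) \<le> integral {u..v} (nearest_sqdist (A - {a}))"
        if "u \<le> v" for u v using Suc.IH[OF A' that] .
    qed
  qed
qed

definition uniform_points :: "real \<Rightarrow> real \<Rightarrow> nat \<Rightarrow> real set" where
  "uniform_points l r m = (\<lambda>j. l + (2 * real j + 1) * (r - l) / (2 * real m)) ` {..<m}"

lemma finite_uniform_points: "finite (uniform_points l r m)"
  unfolding uniform_points_def by simp

lemma card_uniform_points_le: "card (uniform_points l r m) \<le> m"
  unfolding uniform_points_def using card_image_le[of "{..<m}"] by simp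

lemma uniform_points_nonempty: "1 \<le> m \<Longrightarrow> uniform_points l r m \<noteq> {}"
  unfolding uniform_points_def by (simp add: lessThan_empty_iff)

lemma uniform_points_integral_le:
  assumes m: "1 \<le> m" and lr: "l \<le> r"
  shows "integral {l..r} (nearest_sqdist (uniform_points l r m)) \<le> (r - l)^3/(12 * (real m)\<^sup>2)"
proof -
  define d where "d = (r - l) / real m"
  let ?Q = "uniform_points l r m"
  have d0: "0 \<le> d" unfolding d_def using lr by simp
  have Q: "finite ?Q" "?Q \<noteq> {}" using finite_uniform_points uniform_points_nonempty[OF m] by auto
  have intQ: "\<And>u v. nearest_sqdist ?Q integrable_on {u..v}" by (intro integrable_nearest_sqdist Q)
  have "j \<le> m \<Longrightarrow> integral {l..l + real j * d} (nearest_sqdist ?Q) \<le> real j * d^3/12" for j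
  proof (induction j)
    case (Suc j)
    define c where "c = l + (2 * real j + 1) * (r - l) / (2 * real m)"
    have cQ: "c \<in> ?Q" unfolding uniform_points_def c_def using Suc.prems by auto
    have c_mid: "c = ((l + real j * d) + (l + real (Suc j) * d))/2"
      unfolding c_def d_def using m by (simp add: field_simps)
    have ord: "l \<le> l + real j * d" "l + real j * d \<le> l + real (Suc j) * d"
      using d0 by (auto simp: mult_right_mono)
    have "integral {l + real j * d..l + real (Suc j) * d} (nearest_sqdist ?Q)
        \<le> integral {l + real j * d..l + real (Suc j) * d} (\<lambda>x. (x - c)\<^sup>2)"
      using nearest_sqdist_le[OF Q(1) cQ]
      by (intro integral_le intQ integrable_continuous_real continuous_intros) auto
    also have "\<dots> = d^3/12"
      unfolding integral_sq[OF ord(2)] c_mid sq_integral_midpoint by (simp add: algebra_simps)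
    finally show ?case
      using Suc Henstock_Kurzweil_Integration.integral_combine[OF ord intQ]
      by (simp add: algebra_simps)
  qed simp
  moreover have "l + real m * d = r" unfolding d_def using m by simp
  ultimately have "integral {l..r} (nearest_sqdist ?Q) \<le> real m * d^3/12" by force
  also have "\<dots> = (r - l)^3/(12 * (real m)\<^sup>2)"
    unfolding d_def using m by (simp add: power3_eq_cube power2_eq_square field_simps)
  finally show ?thesis .
qed

lemma cell_err_le_uniform_points:
  assumes \<beta>: "finite \<beta>" "uniform_points (J_lo i) (J_hi i) m \<subseteq> \<beta>" and m: "1 \<le> m"
  shows "cell_err \<beta> (Suc i) \<le> J_len i ^ 3 / (12 * (real m)\<^sup>2)"
proof -
  let ?Q = "uniform_points (J_lo i) (J_hi i) m"
  have Q: "finite ?Q" "?Q \<noteq> {}" using finite_uniform_points uniform_points_nonempty[OF m] by auto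
  have "cell_err \<beta> (Suc i) \<le> integral {J_lo i..J_hi i} (nearest_sqdist ?Q)"
    unfolding cell_err_def J_Suc_eq using nearest_sqdist_antimono[OF \<beta> Q(2)] \<beta> Q
    by (intro integral_le integrable_nearest_sqdist) auto
  also have "\<dots> \<le> J_len i ^ 3 / (12 * (real m)\<^sup>2)"
    using uniform_points_integral_le[OF m, of "J_lo i" "J_hi i"] J_lo_less_J_hi[of i] J_hi_eq[of i]
    by simp
  finally show ?thesis .
qed

lemma weight_J_len_cube: "weight (Suc i) * J_len i ^ 3 = (1/18)^(Suc i)"
proof -
  have "J_len i = (1/3)^(Suc i)" by (simp add: J_len_def power_one_over)
  hence "J_len i ^ 3 = ((1/3)^3)^(Suc i)" by (metis power_mult mult.commute)
  moreover have "(3/2::real) * (1/3)^3 = 1/18" by (simp add: power3_eq_cube)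
  ultimately show ?thesis unfolding weight_def by (metis power_mult_distrib)
qed

lemma weighted_cell_err_uniform_le:
  assumes "finite \<beta>" "uniform_points (J_lo i) (J_hi i) m \<subseteq> \<beta>" "1 \<le> m"
  shows "weight (Suc i) * cell_err \<beta> (Suc i) \<le> (1/18)^(Suc i) / (12 * (real m)\<^sup>2)"
proof -
  have "weight (Suc i) * cell_err \<beta> (Suc i) \<le> weight (Suc i) * (J_len i ^ 3 / (12 * (real m)\<^sup>2))"
    using cell_err_le_uniform_points[OF assms] weight_nonneg by (rule mult_left_mono)
  thus ?thesis using weight_J_len_cube[of i] by simp
qed

section \<open>The error of a single centre on the tail\<close>

lemma weighted_sq_integral_J:
  "weight (Suc i) * sq_integral (J_lo i) (J_hi i) p =
     (1 - p)\<^sup>2 * (1/2)^(Suc i) - 5 * (1 - p) * (1/6)^(Suc i) + 19/3 * (1/18)^(Suc i)"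
proof -
  define u :: real where "u = (1/3)^(Suc i)"
  define w :: real where "w = (3/2)^(Suc i)"
  have lo: "J_lo i = 1 - 3*u" and hi: "J_hi i = 1 - 2*u"
    unfolding J_lo_def J_hi_def u_def by (simp_all add: field_simps)
  have wu: "w * u = (1/2)^(Suc i)" "w * u^2 = (1/6)^(Suc i)" "w * u^3 = (1/18)^(Suc i)"
    unfolding w_def u_def by (simp_all flip: power_mult_distrib power_mult add: power2_eq_square power3_eq_cube)
  have "weight (Suc i) * sq_integral (J_lo i) (J_hi i) p
      = (1-p)\<^sup>2 * (w * u) - 5 * (1-p) * (w * u^2) + 19/3 * (w * u^3)"
    unfolding sq_integral_def lo hi weight_def w_def[symmetric]
    by (simp add: power2_eq_square power3_eq_cube field_simps)
  thus ?thesis unfolding wu .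
qed

text \<open>Closed form of the weighted error of the single centre p on all J (Suc (j + N)),
  j \<ge> 0; see sums_tail_cost.\<close>

definition tail_cost :: "nat \<Rightarrow> real \<Rightarrow> real" where
  "tail_cost N p = (1 - p)\<^sup>2 * (1/2)^N - (1 - p) * (1/6)^N + 19/51 * (1/18)^N"

lemma sums_geometric_tail:
  fixes q :: real
  assumes "0 < q" "q < 1"
  shows "(\<lambda>j. q^(Suc (j + N))) sums (q^(Suc N) / (1 - q))"
proof -
  have "(\<lambda>j. q^(Suc N) * q^j) sums (q^(Suc N) * (1/(1-q)))"
    using geometric_sums[of q] assms by (intro sums_mult) auto
  thus ?thesis by (simp add: power_add mult_ac)
qed

lemma sums_tail_cost:
  "(\<lambda>j. weight (Suc (j + N)) * sq_integral (J_lo (j + N)) (J_hi (j + N)) p) sums tail_cost N p"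
proof -
  have "(\<lambda>j. (1 - p)\<^sup>2 * (1/2)^(Suc (j + N)) - 5 * (1 - p) * (1/6)^(Suc (j + N))
           + 19/3 * (1/18)^(Suc (j + N)))
      sums ((1 - p)\<^sup>2 * ((1/2)^(Suc N) / (1 - 1/2)) - 5 * (1 - p) * ((1/6)^(Suc N) / (1 - 1/6))
           + 19/3 * ((1/18)^(Suc N) / (1 - 1/18)))"
    by (intro sums_add sums_diff sums_mult sums_geometric_tail) auto
  moreover have "(1 - p)\<^sup>2 * ((1/2)^(Suc N) / (1 - 1/2)) - 5 * (1 - p) * ((1/6)^(Suc N) / (1 - 1/6))
           + 19/3 * ((1/18)^(Suc N) / (1 - 1/18)) = tail_cost N p"
    unfolding tail_cost_def by simp
  ultimately show ?thesis unfolding weighted_sq_integral_J by simp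
qed

lemma tail_cost_eq_square:
  "tail_cost N p = 25/204 * (1/18)^N + (1/2)^N * (1 - p - (1/3)^N/2)\<^sup>2"
proof -
  have "(1/6::real)^N = (1/2)^N * (1/3)^N" "(1/18::real)^N = (1/2)^N * ((1/3)^N)\<^sup>2"
    by (simp_all flip: power_mult_distrib power_mult add: power2_eq_square)
  thus ?thesis unfolding tail_cost_def by (simp add: power2_eq_square algebra_simps)
qed

lemma tail_cost_ge: "25/204 * (1/18)^N \<le> tail_cost N p"
  unfolding tail_cost_eq_square by simp

lemma tail_cost_min: "tail_cost N (1 - (1/3)^N/2) = 25/204 * (1/18)^N"
  unfolding tail_cost_eq_square by simp

lemma cell_err_le_sq_integral:
  assumes "finite A" "A \<noteq> {}" "\<And>x. x \<in> J (Suc i) \<Longrightarrow> nearest_sqdist A x \<le> (x - p)\<^sup>2"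
  shows "cell_err A (Suc i) \<le> sq_integral (J_lo i) (J_hi i) p"
proof -
  have "cell_err A (Suc i) \<le> integral {J_lo i..J_hi i} (\<lambda>x. (x - p)\<^sup>2)"
    unfolding cell_err_def J_Suc_eq using assms
    by (intro integral_le integrable_nearest_sqdist integrable_continuous_real continuous_intros)
      (auto simp: J_Suc_eq)
  thus ?thesis using integral_sq J_lo_less_J_hi less_imp_le by metis
qed

lemma cell_err_eq_sq_integral:
  assumes "finite A" "A \<noteq> {}" "\<And>x. x \<in> J (Suc i) \<Longrightarrow> nearest_sqdist A x = (x - p)\<^sup>2"
  shows "cell_err A (Suc i) = sq_integral (J_lo i) (J_hi i) p"
proof -
  have "cell_err A (Suc i) = integral {J_lo i..J_hi i} (\<lambda>x. (x - p)\<^sup>2)"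
    unfolding cell_err_def J_Suc_eq using assms by (intro integral_cong) (auto simp: J_Suc_eq)
  thus ?thesis using integral_sq J_lo_less_J_hi less_imp_le by metis
qed

lemma cost_from_le_tail_cost:
  assumes "finite A" "A \<noteq> {}" "\<And>j x. x \<in> J (Suc (j + N)) \<Longrightarrow> nearest_sqdist A x \<le> (x - p)\<^sup>2"
  shows "cost_from A N \<le> tail_cost N p"
  unfolding cost_from_def
proof (rule sums_le[OF _ summable_sums sums_tail_cost])
  show "summable (\<lambda>j. weight (Suc (j + N)) * cell_err A (Suc (j + N)))"
    using summable_ignore_initial_segment[OF summable_cost[OF assms(1,2)], of N] by simp
  fix j show "weight (Suc (j + N)) * cell_err A (Suc (j + N))
      \<le> weight (Suc (j + N)) * sq_integral (J_lo (j + N)) (J_hi (j + N)) p"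
    using cell_err_le_sq_integral[OF assms(1,2) assms(3)] weight_nonneg by (intro mult_left_mono)
qed

lemma cost_from_eq_tail_cost:
  assumes "finite A" "A \<noteq> {}" "\<And>j x. x \<in> J (Suc (j + N)) \<Longrightarrow> nearest_sqdist A x = (x - p)\<^sup>2"
  shows "cost_from A N = tail_cost N p"
  unfolding cost_from_def using cell_err_eq_sq_integral[OF assms(1,2) assms(3)] sums_unique[OF sums_tail_cost[of N p]]
  by simp

lemma cost_from_le_tail_min:
  assumes "finite \<beta>" "1 - (1/3)^N/2 \<in> \<beta>"
  shows "cost_from \<beta> N \<le> 25/204 * (1/18)^N"
proof -
  have "cost_from \<beta> N \<le> tail_cost N (1 - (1/3)^N/2)"
    using assms by (intro cost_from_le_tail_cost nearest_sqdist_le) auto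
  thus ?thesis unfolding tail_cost_min .
qed

lemma cost_from_le_midpoint_and_tail:
  assumes "finite \<beta>" "\<beta> \<noteq> {}" "uniform_points (J_lo N) (J_hi N) 1 \<subseteq> \<beta>" "1 - (1/3)^(Suc N)/2 \<in> \<beta>"
  shows "cost_from \<beta> N \<le> (1/18)^(Suc N) / 12 + 25/204 * (1/18)^(Suc N)"
proof -
  have "weight (Suc N) * cell_err \<beta> (Suc N) \<le> (1/18)^(Suc N) / 12"
    using weighted_cell_err_uniform_le[OF assms(1,3)] by simp
  moreover have "cost_from \<beta> (Suc N) \<le> 25/204 * (1/18)^(Suc N)"
    by (rule cost_from_le_tail_min[OF assms(1,4)])
  ultimately show ?thesis using cost_from_Suc[OF assms(1,2), of N] by simp
qed

text \<open>Gain of moving the tail centre from c' + e to c' when its cell starts at J_lo k + t.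
  With A = (1/2)^(k+1) and u = J_len k, the left-hand side equals
  A e (t (3t - 5u) - e (2u - t)) / u.\<close>

lemma tail_pt_shift_gain:
  fixes t e :: real and k :: nat
  defines "c' \<equiv> J_lo k + 2*t + 3/2 * J_len k"
  assumes t: "0 < t" "t < 3/4 * J_len k" and e: "0 < e"
  shows "weight (Suc k) * (sq_integral (J_lo k + t) (J_hi k) c' - sq_integral (J_lo k + t) (J_hi k) (c' + e))
         + tail_cost (Suc k) c' - tail_cost (Suc k) (c' + e) < 0"
proof -
  define u where "u = J_len k"
  define A :: real where "A = (1/2)^(Suc k)"
  have u: "0 < u" unfolding u_def by (rule J_len_pos)
  have A: "0 < A" unfolding A_def by simp
  have weight: "weight (Suc k) = A / u"
    unfolding weight_def A_def u_def J_len_def by (simp add: power_divide)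
  have "(1/6::real)^(Suc k) = A * u"
    unfolding A_def u_def J_len_def by (simp add: power_divide flip: power_mult_distrib)
  hence tail: "\<And>p. tail_cost (Suc k) p = (1 - p)\<^sup>2 * A - (1 - p) * A * u + 19/51 * (1/18)^(Suc k)"
    unfolding tail_cost_def A_def by simp
  have ends: "J_hi k = J_lo k + u" "1 - c' = 3/2*u - 2*t" "1 - (c' + e) = 3/2*u - 2*t - e"
    using J_hi_eq[of k] one_minus_J_lo[of k] unfolding u_def c'_def by auto
  have "weight (Suc k) * (sq_integral (J_lo k + t) (J_hi k) c' - sq_integral (J_lo k + t) (J_hi k) (c' + e))
         + tail_cost (Suc k) c' - tail_cost (Suc k) (c' + e)
      = (A/u) * (sq_integral (J_lo k + t) (J_lo k + u) c' - sq_integral (J_lo k + t) (J_lo k + u) (c' + e))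
        + ((3/2*u - 2*t)\<^sup>2 * A - (3/2*u - 2*t) * A * u)
        - ((3/2*u - 2*t - e)\<^sup>2 * A - (3/2*u - 2*t - e) * A * u)"
    unfolding weight tail ends by simp
  also have "\<dots> = A * e * (t * (3*t - 5*u) - e * (2*u - t)) / u"
    unfolding c'_def u_def[symmetric] sq_integral_def using u
    by (simp add: field_simps power2_eq_square power3_eq_cube)
  also have "\<dots> < 0"
  proof -
    have "t * (3*t - 5*u) < 0" "0 < e * (2*u - t)"
      using t e u unfolding u_def by (auto intro: mult_pos_neg mult_pos_pos)
    hence "A * e * (t * (3*t - 5*u) - e * (2*u - t)) < 0"
      using A e by (intro mult_pos_neg) auto
    thus ?thesis using u by (simp add: divide_neg_pos)
  qed
  finally show ?thesis .
qed

section \<open>Local structure of an optimal set\<close>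

locale canonical_optimal =
  fixes n k :: nat and \<alpha> :: "real set"
  assumes optimal: "optimal_n_means n \<alpha>" and k_pos: "k \<ge> 1"
    and blocks_nonempty: "\<forall>j\<in>{1..k}. \<alpha> \<inter> J j \<noteq> {}"
    and tail_single: "card (\<alpha> \<inter> {1 - 1/3^k..1}) = 1"
begin

lemma finite_alpha: "finite \<alpha>" and alpha_nonempty: "\<alpha> \<noteq> {}" and card_alpha_le: "card \<alpha> \<le> n"
  using optimal unfolding optimal_n_means_def by auto

lemma not_cost_less:
  assumes "finite \<beta>" "\<beta> \<noteq> {}" "card \<beta> \<le> n"
  shows "\<not> cost \<beta> < cost \<alpha>"
  using optimal_cost_le[OF optimal assms] by linarith

lemma no_cellwise_improvement:
  assumes \<beta>: "finite \<beta>" "\<beta> \<noteq> {}" "card \<beta> \<le> n"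
    and le: "\<And>i. cell_err \<beta> (Suc i) \<le> cell_err \<alpha> (Suc i)"
    and lt: "cell_err \<beta> (Suc i0) < cell_err \<alpha> (Suc i0)"
  shows False
proof -
  have "0 < weight (Suc i0)" by (simp add: weight_def)
  hence "cost \<beta> < cost \<alpha>" using lt
    by (intro cost_less[OF finite_alpha alpha_nonempty \<beta>(1,2), of "{i0}"] le) auto
  thus False using not_cost_less[OF \<beta>] by blast
qed

definition voronoi :: "real \<Rightarrow> real set" where
  "voronoi a = {x. \<forall>b\<in>\<alpha> - {a}. (x - a)\<^sup>2 < (x - b)\<^sup>2}"

lemma voronoi_iff:
  "x \<in> voronoi a \<longleftrightarrow> (\<forall>b\<in>\<alpha> - {a}. (b < a \<longrightarrow> (a + b)/2 < x) \<and> (a < b \<longrightarrow> x < (a + b)/2))"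
  unfolding voronoi_def sq_less_sq_iff mem_Collect_eq
  by (intro ball_cong refl) (auto simp: linorder_neq_iff)

lemma voronoi_interval: "x1 \<in> voronoi a \<Longrightarrow> x2 \<in> voronoi a \<Longrightarrow> x1 \<le> y \<Longrightarrow> y \<le> x2 \<Longrightarrow> y \<in> voronoi a"
  unfolding voronoi_iff by fastforce

lemma not_in_voronoi:
  "y \<in> \<alpha> \<Longrightarrow> y \<noteq> a \<Longrightarrow> (x - y)\<^sup>2 \<le> (x - a)\<^sup>2 \<Longrightarrow> x \<notin> voronoi a"
  unfolding voronoi_def by (auto simp: not_less intro!: bexI[of _ y])

lemma nearest_sqdist_move:
  assumes a: "a \<in> \<alpha>"
  shows "x \<notin> voronoi a \<Longrightarrow> nearest_sqdist (insert a' (\<alpha> - {a})) x \<le> nearest_sqdist \<alpha> x"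
    and "x \<in> voronoi a \<Longrightarrow> nearest_sqdist \<alpha> x = (x - a)\<^sup>2"
    and "nearest_sqdist (insert a' (\<alpha> - {a})) x \<le> (x - a')\<^sup>2"
proof -
  show "nearest_sqdist (insert a' (\<alpha> - {a})) x \<le> (x - a')\<^sup>2"
    using finite_alpha by (intro nearest_sqdist_le) auto
next
  assume x: "x \<in> voronoi a"
  have "(x - a)\<^sup>2 \<le> (x - b)\<^sup>2" if "b \<in> \<alpha>" for b
    using x that unfolding voronoi_def by (cases "b = a") (auto intro: less_imp_le)
  hence "(x - a)\<^sup>2 \<le> nearest_sqdist \<alpha> x"
    by (intro nearest_sqdist_greatest finite_alpha alpha_nonempty)
  thus "nearest_sqdist \<alpha> x = (x - a)\<^sup>2" using nearest_sqdist_le[OF finite_alpha a, of x] by linarith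
next
  assume "x \<notin> voronoi a"
  then obtain b where b: "b \<in> \<alpha>" "b \<noteq> a" "(x - b)\<^sup>2 \<le> (x - a)\<^sup>2"
    unfolding voronoi_def by (auto simp: not_less)
  obtain c where c: "c \<in> \<alpha>" "nearest_sqdist \<alpha> x = (x - c)\<^sup>2"
    using nearest_sqdist_attained[OF finite_alpha alpha_nonempty] by blast
  obtain d where "d \<in> insert a' (\<alpha> - {a})" "(x - d)\<^sup>2 \<le> (x - c)\<^sup>2"
  proof (cases "c = a")
    case True thus ?thesis using that[of b] b by auto
  next
    case False thus ?thesis using that[of c] c by auto
  qed
  thus "nearest_sqdist (insert a' (\<alpha> - {a})) x \<le> nearest_sqdist \<alpha> x"
    using c nearest_sqdist_le[of "insert a' (\<alpha> - {a})" d x] finite_alpha by auto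
qed

lemma card_move_le:
  assumes "a \<in> \<alpha>"
  shows "card (insert a' (\<alpha> - {a})) \<le> n"
proof -
  have "card (insert a' (\<alpha> - {a})) \<le> Suc (card (\<alpha> - {a}))" by (simp add: card_insert_le_m1)
  also have "\<dots> = card \<alpha>" using assms finite_alpha by (metis card_Suc_Diff1)
  finally show ?thesis using card_alpha_le by linarith
qed

text \<open>If the Voronoi cell of a meets the support of P, moving a to a point that is strictly
  closer on the whole cell lowers the cost; otherwise a is useless and can be moved to any
  new point of J 1.\<close>

lemma no_improving_move:
  assumes a: "a \<in> \<alpha>"
    and closer: "\<And>i x. x \<in> J (Suc i) \<Longrightarrow> x \<in> voronoi a \<Longrightarrow> (x - a')\<^sup>2 < (x - a)\<^sup>2"
  shows False
proof (cases "\<exists>i x. x \<in> J (Suc i) \<and> x \<in> voronoi a")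
  case True
  then obtain i0 x0 where x0: "x0 \<in> J (Suc i0)" "x0 \<in> voronoi a" by blast
  let ?\<beta> = "insert a' (\<alpha> - {a})"
  have \<beta>: "finite ?\<beta>" "?\<beta> \<noteq> {}" using finite_alpha by auto
  have lt: "nearest_sqdist ?\<beta> x < nearest_sqdist \<alpha> x" if "x \<in> J (Suc i)" "x \<in> voronoi a" for x i
    using nearest_sqdist_move(2)[OF a that(2)] nearest_sqdist_move(3)[OF a, of a' x] closer[OF that]
    by linarith
  have le: "nearest_sqdist ?\<beta> x \<le> nearest_sqdist \<alpha> x" if "x \<in> J (Suc i)" for x i
    using lt[OF that] nearest_sqdist_move(1)[OF a] by (cases "x \<in> voronoi a") auto
  have "cell_err ?\<beta> (Suc i0) < cell_err \<alpha> (Suc i0)"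
    by (rule cell_err_strict_mono[OF finite_alpha alpha_nonempty \<beta> le x0(1) lt[OF x0]])
  moreover have "\<And>i. cell_err ?\<beta> (Suc i) \<le> cell_err \<alpha> (Suc i)"
    by (rule cell_err_mono[OF finite_alpha alpha_nonempty \<beta> le])
  ultimately show False using no_cellwise_improvement[OF \<beta> card_move_le[OF a]] by blast
next
  case False
  have "infinite (J (Suc 0))" using J_lo_less_J_hi[of 0] by (simp add: J_Suc_eq)
  then obtain x0 where x0: "x0 \<in> J (Suc 0)" "x0 \<notin> \<alpha>"
    using finite_alpha by (meson finite_subset subsetI)
  let ?\<beta> = "insert x0 (\<alpha> - {a})"
  have \<beta>: "finite ?\<beta>" "?\<beta> \<noteq> {}" using finite_alpha by auto
  have le: "nearest_sqdist ?\<beta> x \<le> nearest_sqdist \<alpha> x" if "x \<in> J (Suc i)" for x i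
    using nearest_sqdist_move(1)[OF a] False that by blast
  obtain c where "c \<in> \<alpha>" "nearest_sqdist \<alpha> x0 = (x0 - c)\<^sup>2"
    using nearest_sqdist_attained[OF finite_alpha alpha_nonempty] by blast
  hence "0 < nearest_sqdist \<alpha> x0" using x0 by auto
  moreover have "nearest_sqdist ?\<beta> x0 \<le> 0" using nearest_sqdist_move(3)[OF a, of x0 x0] by simp
  ultimately have lt: "nearest_sqdist ?\<beta> x0 < nearest_sqdist \<alpha> x0" by linarith
  have "cell_err ?\<beta> (Suc 0) < cell_err \<alpha> (Suc 0)"
    by (rule cell_err_strict_mono[OF finite_alpha alpha_nonempty \<beta> le x0(1) lt])
  moreover have "\<And>i. cell_err ?\<beta> (Suc i) \<le> cell_err \<alpha> (Suc i)"
    by (rule cell_err_mono[OF finite_alpha alpha_nonempty \<beta> le])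
  ultimately show False using no_cellwise_improvement[OF \<beta> card_move_le[OF a]] by blast
qed

definition tail_pt :: real where
  "tail_pt = (THE c. \<alpha> \<inter> {J_lo k..1} = {c})"

lemma tail_pt_eq: "\<alpha> \<inter> {J_lo k..1} = {tail_pt}"
proof -
  have "{1 - 1/3^k..1} = {J_lo k..1}" by (simp add: J_lo_def)
  hence "card (\<alpha> \<inter> {J_lo k..1}) = 1" using tail_single by simp
  then obtain c where c: "\<alpha> \<inter> {J_lo k..1} = {c}" by (rule card_1_singletonE)
  have "tail_pt = c" unfolding tail_pt_def by (rule the_equality) (use c in auto)
  thus ?thesis using c by simp
qed

lemma tail_pt_mem: "tail_pt \<in> \<alpha>" "J_lo k \<le> tail_pt" "tail_pt \<le> 1"
proof -
  have "tail_pt \<in> \<alpha> \<inter> {J_lo k..1}" using tail_pt_eq by simp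
  thus "tail_pt \<in> \<alpha>" "J_lo k \<le> tail_pt" "tail_pt \<le> 1" by simp_all
qed

lemma tail_pt_unique: "a \<in> \<alpha> \<Longrightarrow> J_lo k \<le> a \<Longrightarrow> a \<le> 1 \<Longrightarrow> a = tail_pt"
proof -
  assume "a \<in> \<alpha>" "J_lo k \<le> a" "a \<le> 1"
  hence "a \<in> \<alpha> \<inter> {J_lo k..1}" by simp
  thus "a = tail_pt" using tail_pt_eq by simp
qed

lemma exists_point_in_J: "i < k \<Longrightarrow> \<exists>y\<in>\<alpha>. y \<in> J (Suc i)"
  using blocks_nonempty by (metis Int_emptyI Suc_leI atLeastAtMost_iff le_add1 plus_1_eq_Suc)

lemma J_lo_k: "J_lo k = J_hi (k - 1) + J_len (k - 1)"
  using k_pos J_lo_Suc by (metis Suc_diff_1 le_numeral_extra(2) less_le_trans zero_less_one)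

lemma J_len_k: "3 * J_len k = J_len (k - 1)"
  using k_pos J_len_Suc[of "k - 1"] by simp

lemma not_voronoi_of_far_J:
  assumes a: "a \<in> \<alpha>" and i: "i < k" and far: "a \<le> J_lo i - J_len i \<or> J_hi i + J_len i \<le> a"
    and x: "x \<in> J (Suc i)"
  shows "x \<notin> voronoi a"
proof -
  obtain y where y: "y \<in> \<alpha>" "y \<in> J (Suc i)" using exists_point_in_J[OF i] by blast
  have "\<bar>x - y\<bar> \<le> J_len i" "J_len i \<le> \<bar>x - a\<bar>" using far x y(2) J_hi_eq[of i] J_Suc_eq by auto
  moreover have "y \<noteq> a" using far y(2) J_Suc_eq J_len_pos[of i] J_hi_eq[of i] by auto
  ultimately show ?thesis using not_in_voronoi[OF y(1)] sq_le_sq_of_dist by blast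
qed

lemma not_voronoi_of_far_tail:
  assumes a: "a \<in> \<alpha>" and i: "k \<le> i" and far: "a \<le> J_lo k - 3 * J_len k" and x: "x \<in> J (Suc i)"
  shows "x \<notin> voronoi a"
proof -
  have x1: "J_lo k \<le> x" "x \<le> 1" using mem_J_ge_J_lo[OF x i] x J_Suc_eq J_hi_less_1[of i] by auto
  have "\<bar>x - tail_pt\<bar> \<le> 3 * J_len k" "3 * J_len k \<le> \<bar>x - a\<bar>"
    using x1 far tail_pt_mem one_minus_J_lo[of k] by auto
  moreover have "tail_pt \<noteq> a" using far tail_pt_mem J_len_pos[of k] by auto
  ultimately show ?thesis using not_in_voronoi[OF tail_pt_mem(1)] sq_le_sq_of_dist by blast
qed

lemma voronoi_within_own_J:
  assumes a: "a \<in> \<alpha>" "a \<in> J (Suc i)" and i: "i < k" and i': "i' \<noteq> i" and x: "x \<in> J (Suc i')"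
  shows "x \<notin> voronoi a"
proof -
  have a_J: "J_lo i \<le> a" "a \<le> J_hi i" using a J_Suc_eq by auto
  consider "i' < i" | "i < i'" "i' < k" | "k \<le> i'" using i' by linarith
  thus ?thesis
  proof cases
    case 1
    thus ?thesis using J_hi_plus_len_le[OF 1] not_voronoi_of_far_J[OF a(1) _ _ x] i a_J by auto
  next
    case 2
    thus ?thesis using J_hi_plus_len_le[OF 2(1)] J_len_antimono[of i i'] a_J
      not_voronoi_of_far_J[OF a(1) _ _ x] by auto
  next
    case 3
    have "J_hi i \<le> J_hi (k - 1)" using i J_hi_mono by auto
    thus ?thesis using not_voronoi_of_far_tail[OF a(1) 3 _ x] a_J J_lo_k J_len_k by linarith
  qed
qed

lemma points_nonneg: "a \<in> \<alpha> \<Longrightarrow> 0 \<le> a"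
proof (rule ccontr)
  assume a: "a \<in> \<alpha>" "\<not> 0 \<le> a"
  show False
  proof (rule no_improving_move[OF a(1), of 0])
    fix i x assume "x \<in> J (Suc i)"
    hence "0 \<le> x" using J_Suc_eq J_lo_nonneg[of i] by auto
    thus "(x - 0)\<^sup>2 < (x - a)\<^sup>2" using a(2)
      by (simp add: power2_eq_square algebra_simps mult_less_0_iff)
  qed
qed

lemma points_le_1: "a \<in> \<alpha> \<Longrightarrow> a \<le> 1"
proof (rule ccontr)
  assume a: "a \<in> \<alpha>" "\<not> a \<le> 1"
  show False
  proof (rule no_improving_move[OF a(1), of 1])
    fix i x assume "x \<in> J (Suc i)"
    hence "x \<le> 1" using J_Suc_eq J_hi_less_1[of i] by auto
    thus "(x - 1)\<^sup>2 < (x - a)\<^sup>2" using a(2) by (simp add: sq_less_sq_iff)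
  qed
qed

text \<open>Centroid condition: a point whose Voronoi cell meets the support of P exactly in
  [s, t] \<subseteq> J (Suc i) is the midpoint of [s, t]; otherwise moving it there gains
  (t - s) (a - (s + t)/2)^2 on J (Suc i).\<close>

lemma point_is_cell_midpoint:
  assumes a: "a \<in> \<alpha>" and st: "J_lo i \<le> s" "s < t" "t \<le> J_hi i"
    and cell_sub: "\<And>x. x \<in> J (Suc i) \<Longrightarrow> x \<in> voronoi a \<Longrightarrow> s \<le> x \<and> x \<le> t"
    and cell_sup: "\<And>x. s < x \<Longrightarrow> x < t \<Longrightarrow> x \<in> voronoi a"
    and cell_only: "\<And>i' x. i' \<noteq> i \<Longrightarrow> x \<in> J (Suc i') \<Longrightarrow> x \<notin> voronoi a"
  shows "a = (s + t)/2"
proof (rule ccontr)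
  assume a_ne: "a \<noteq> (s + t)/2"
  define m where "m = (s + t)/2"
  let ?\<beta> = "insert m (\<alpha> - {a})"
  have \<beta>: "finite ?\<beta>" "?\<beta> \<noteq> {}" using finite_alpha by auto
  have "cell_err ?\<beta> (Suc i) \<le> cell_err \<alpha> (Suc i) + integral {s..t} (\<lambda>x. (x - m)\<^sup>2 - (x - a)\<^sup>2)"
    unfolding cell_err_def J_Suc_eq
  proof (rule integral_le_plus_piece)
    show "continuous_on {J_lo i..J_hi i} (nearest_sqdist ?\<beta>)"
      by (rule continuous_on_nearest_sqdist[OF \<beta>])
    show "continuous_on {J_lo i..J_hi i} (nearest_sqdist \<alpha>)"
      by (rule continuous_on_nearest_sqdist[OF finite_alpha alpha_nonempty])
    show "continuous_on {s..t} (\<lambda>x. (x - m)\<^sup>2 - (x - a)\<^sup>2)" by (intro continuous_intros)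
    show "J_lo i \<le> s" "s \<le> t" "t \<le> J_hi i" using st by auto
    fix x assume x: "x \<in> {J_lo i..J_hi i}" "x \<noteq> s" "x \<noteq> t"
    show "nearest_sqdist ?\<beta> x \<le> nearest_sqdist \<alpha> x + (if x \<in> {s..t} then (x - m)\<^sup>2 - (x - a)\<^sup>2 else 0)"
    proof (cases "x \<in> {s..t}")
      case True
      hence "x \<in> voronoi a" using cell_sup x by auto
      thus ?thesis using True nearest_sqdist_move(2)[OF a] nearest_sqdist_move(3)[OF a, of m x] by auto
    next
      case False
      hence "x \<notin> voronoi a" using cell_sub x J_Suc_eq by auto
      thus ?thesis using False nearest_sqdist_move(1)[OF a, of x m] by auto
    qed
  qed
  also have "integral {s..t} (\<lambda>x. (x - m)\<^sup>2 - (x - a)\<^sup>2)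
      = integral {s..t} (\<lambda>x. (x - m)\<^sup>2) - integral {s..t} (\<lambda>x. (x - a)\<^sup>2)"
    by (rule integral_diff) (auto intro!: integrable_continuous_real continuous_intros)
  also have "\<dots> = sq_integral s t m - sq_integral s t a" using st by (simp add: integral_sq)
  also have "\<dots> = - (t - s) * (a - m)\<^sup>2"
    unfolding m_def sq_integral_def by (simp add: power2_eq_square power3_eq_cube field_simps)
  finally have bound: "cell_err ?\<beta> (Suc i) \<le> cell_err \<alpha> (Suc i) - (t - s) * (a - m)\<^sup>2"
    by (simp add: algebra_simps)
  have "0 < (t - s) * (a - m)\<^sup>2" using st a_ne by (intro mult_pos_pos) (auto simp: m_def)
  hence "cell_err ?\<beta> (Suc i) < cell_err \<alpha> (Suc i)" using bound by linarith
  moreover have "cell_err ?\<beta> (Suc i') \<le> cell_err \<alpha> (Suc i')" for i'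
  proof (cases "i' = i")
    case False
    thus ?thesis using cell_only[OF False] nearest_sqdist_move(1)[OF a]
      by (intro cell_err_mono finite_alpha alpha_nonempty \<beta>) blast
  qed (use calculation in simp)
  ultimately show False using no_cellwise_improvement[OF \<beta> card_move_le[OF a]] by blast
qed

text \<open>A point g in the gap between J (Suc i) and J (Suc (Suc i)) must serve both
  neighbouring intervals: if its cell met the support only on one side, moving g to the
  nearer endpoint would be strictly better.\<close>

lemma gap_point_voronoi_ends:
  assumes g: "g \<in> \<alpha>" "J_hi i < g" "g < J_lo (Suc i)"
  shows "J_hi i \<in> voronoi g" "J_lo (Suc i) \<in> voronoi g"
proof -
  have left: "\<exists>i1 x1. i1 \<le> i \<and> x1 \<in> J (Suc i1) \<and> x1 \<in> voronoi g"
  proof (rule ccontr)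
    assume none: "\<not> ?thesis"
    show False
    proof (rule no_improving_move[OF g(1), of "J_lo (Suc i)"])
      fix i' x assume x: "x \<in> J (Suc i')" "x \<in> voronoi g"
      hence "J_lo (Suc i) \<le> x" using none mem_J_ge_J_lo[OF x(1)] by (metis not_less_eq_eq)
      thus "(x - J_lo (Suc i))\<^sup>2 < (x - g)\<^sup>2" using g by (simp add: sq_less_sq_iff)
    qed
  qed
  have right: "\<exists>i2 x2. Suc i \<le> i2 \<and> x2 \<in> J (Suc i2) \<and> x2 \<in> voronoi g"
  proof (rule ccontr)
    assume none: "\<not> ?thesis"
    show False
    proof (rule no_improving_move[OF g(1), of "J_hi i"])
      fix i' x assume x: "x \<in> J (Suc i')" "x \<in> voronoi g"
      hence "x \<le> J_hi i" using none mem_J_le_J_hi[OF x(1)] by (metis not_less_eq_eq)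
      thus "(x - J_hi i)\<^sup>2 < (x - g)\<^sup>2" using g by (simp add: sq_less_sq_iff)
    qed
  qed
  obtain i1 x1 where 1: "i1 \<le> i" "x1 \<in> J (Suc i1)" "x1 \<in> voronoi g" using left by blast
  obtain i2 x2 where 2: "Suc i \<le> i2" "x2 \<in> J (Suc i2)" "x2 \<in> voronoi g" using right by blast
  have "x1 \<le> J_hi i" "J_lo (Suc i) \<le> x2"
    using mem_J_le_J_hi[OF 1(2,1)] mem_J_ge_J_lo[OF 2(2,1)] by auto
  thus "J_hi i \<in> voronoi g" "J_lo (Suc i) \<in> voronoi g"
    using voronoi_interval[OF 1(3) 2(3)] g by auto
qed

lemma gap_point_left_neighbour:
  assumes g: "g \<in> \<alpha>" "J_hi i < g" "g < J_lo (Suc i)" and i: "i < k"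
  obtains a where "a \<in> \<alpha>" "a \<in> J (Suc i)" "a < g" "(a + g)/2 < J_hi i"
    "\<forall>b\<in>\<alpha>. b < g \<longrightarrow> b \<le> a"
proof -
  define L where "L = {b \<in> \<alpha>. b < g}"
  obtain y where y: "y \<in> \<alpha>" "y \<in> J (Suc i)" using exists_point_in_J[OF i] by blast
  have L: "finite L" "y \<in> L" using finite_alpha y g J_Suc_eq unfolding L_def by auto
  define a where "a = Max L"
  have "a \<in> L" unfolding a_def using L by (intro Max_in) auto
  hence a: "a \<in> \<alpha>" "a < g" unfolding L_def by auto
  have a_max: "\<And>b. b \<in> \<alpha> \<Longrightarrow> b < g \<Longrightarrow> b \<le> a"
    unfolding a_def using L(1) by (intro Max_ge) (auto simp: L_def)
  have "(g + a)/2 < J_hi i" using gap_point_voronoi_ends(1)[OF g] a unfolding voronoi_iff by auto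
  moreover have "J_lo i \<le> a" using a_max[OF y(1)] y(2) J_Suc_eq g by auto
  ultimately show ?thesis using a a_max J_Suc_eq by (intro that[OF a(1) _ a(2)]) (auto simp: add.commute)
qed

lemma gap_point_right_neighbour:
  assumes g: "g \<in> \<alpha>" "J_hi i < g" "g < J_lo (Suc i)" and i: "Suc i < k"
  obtains b where "b \<in> \<alpha>" "b \<in> J (Suc (Suc i))" "g < b" "J_lo (Suc i) < (g + b)/2"
    "\<forall>b'\<in>\<alpha>. g < b' \<longrightarrow> b \<le> b'"
proof -
  define R where "R = {b \<in> \<alpha>. g < b}"
  obtain y where y: "y \<in> \<alpha>" "y \<in> J (Suc (Suc i))" using exists_point_in_J[OF i] by blast
  have R: "finite R" "y \<in> R" using finite_alpha y g J_Suc_eq unfolding R_def by auto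
  define b where "b = Min R"
  have "b \<in> R" unfolding b_def using R by (intro Min_in) auto
  hence b: "b \<in> \<alpha>" "g < b" unfolding R_def by auto
  have b_min: "\<And>b'. b' \<in> \<alpha> \<Longrightarrow> g < b' \<Longrightarrow> b \<le> b'"
    unfolding b_def using R(1) by (intro Min_le) (auto simp: R_def)
  have "J_lo (Suc i) < (g + b)/2" using gap_point_voronoi_ends(2)[OF g] b unfolding voronoi_iff by auto
  moreover have "b \<le> J_hi (Suc i)" using b_min[OF y(1)] y(2) J_Suc_eq g by auto
  ultimately show ?thesis using b b_min J_Suc_eq by (intro that[OF b(1) _ b(2)]) auto
qed

text \<open>Both bounds come from the centroid condition for the neighbour of g inside the
  adjacent interval, whose cell reaches halfway to g.\<close>

lemma gap_point_left_bound:
  assumes g: "g \<in> \<alpha>" "J_hi i < g" "g < J_lo (Suc i)" and i: "i < k"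
  shows "g < J_hi i + J_len i / 2"
proof -
  obtain a where a: "a \<in> \<alpha>" "a \<in> J (Suc i)" "a < g" "(a + g)/2 < J_hi i"
    and a_max: "\<forall>b\<in>\<alpha>. b < g \<longrightarrow> b \<le> a"
    by (rule gap_point_left_neighbour[OF g i])
  define S where "S = insert (J_lo i) ((\<lambda>b. (a + b)/2) ` {b \<in> \<alpha>. b < a})"
  define s where "s = Max S"
  define t where "t = (a + g)/2"
  have S: "finite S" "J_lo i \<in> S" using finite_alpha unfolding S_def by auto
  have s: "J_lo i \<le> s" "s \<le> a" using S a(2) J_Suc_eq unfolding s_def by (auto simp: S_def Max_le_iff)
  have s_ge: "(a + b)/2 \<le> s" if "b \<in> \<alpha>" "b < a" for b
    unfolding s_def using S that by (intro Max_ge) (auto simp: S_def)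
  have "a = (s + t)/2"
  proof (rule point_is_cell_midpoint[OF a(1) s(1)])
    show "s < t" "t \<le> J_hi i" using s(2) a(3,4) unfolding t_def by auto
    fix x
    show "s \<le> x \<and> x \<le> t" if "x \<in> J (Suc i)" "x \<in> voronoi a"
      using that a g(1) S unfolding s_def t_def voronoi_iff
      by (auto simp: S_def J_Suc_eq Max_le_iff add.commute)
    show "x \<in> voronoi a" if "s < x" "x < t"
      unfolding voronoi_iff
    proof (intro ballI conjI impI)
      fix b assume b: "b \<in> \<alpha> - {a}"
      show "(a + b)/2 < x" if "b < a" using s_ge[of b] b that \<open>s < x\<close> by auto
      show "x < (a + b)/2" if "a < b" using a_max b that \<open>x < t\<close> unfolding t_def by force
    qed
    show "x \<notin> voronoi a" if "i' \<noteq> i" "x \<in> J (Suc i')" for i'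
      using voronoi_within_own_J[OF a(1,2) i that] .
  qed
  thus ?thesis using s(1) a(4) J_hi_eq[of i] unfolding t_def by argo
qed

lemma gap_point_right_bound:
  assumes g: "g \<in> \<alpha>" "J_hi i < g" "g < J_lo (Suc i)" and i: "Suc i < k"
  shows "J_lo (Suc i) - J_len i / 6 < g"
proof -
  obtain b where b: "b \<in> \<alpha>" "b \<in> J (Suc (Suc i))" "g < b" "J_lo (Suc i) < (g + b)/2"
    and b_min: "\<forall>b'\<in>\<alpha>. g < b' \<longrightarrow> b \<le> b'"
    by (rule gap_point_right_neighbour[OF g i])
  define T where "T = insert (J_hi (Suc i)) ((\<lambda>b'. (b + b')/2) ` {b' \<in> \<alpha>. b < b'})"
  define t where "t = Min T"
  define s where "s = (g + b)/2"
  have T: "finite T" "J_hi (Suc i) \<in> T" using finite_alpha unfolding T_def by auto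
  have t: "t \<le> J_hi (Suc i)" "b \<le> t" using T b(2) J_Suc_eq unfolding t_def by (auto simp: T_def Min_ge_iff)
  have t_le: "t \<le> (b + b')/2" if "b' \<in> \<alpha>" "b < b'" for b'
    unfolding t_def using T that by (intro Min_le) (auto simp: T_def)
  have "b = (s + t)/2"
  proof (rule point_is_cell_midpoint[OF b(1)])
    show "J_lo (Suc i) \<le> s" "s < t" "t \<le> J_hi (Suc i)" using t(1,2) b(3,4) unfolding s_def by auto
    fix x
    show "s \<le> x \<and> x \<le> t" if "x \<in> J (Suc (Suc i))" "x \<in> voronoi b"
      using that b g(1) T unfolding t_def s_def voronoi_iff
      by (auto simp: T_def J_Suc_eq Min_ge_iff add.commute)
    show "x \<in> voronoi b" if "s < x" "x < t"
      unfolding voronoi_iff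
    proof (intro ballI conjI impI)
      fix b' assume b': "b' \<in> \<alpha> - {b}"
      show "x < (b + b')/2" if "b < b'" using t_le[of b'] b' that \<open>x < t\<close> by auto
      show "(b + b')/2 < x" if "b' < b" using b_min b' that \<open>s < x\<close> unfolding s_def by force
    qed
    show "x \<notin> voronoi b" if "i' \<noteq> Suc i" "x \<in> J (Suc i')" for i'
      using voronoi_within_own_J[OF b(1,2) i that] .
  qed
  thus ?thesis using t(1) b(4) J_hi_eq[of "Suc i"] J_len_Suc[of i] unfolding s_def by argo
qed

lemma no_point_in_inner_gap:
  assumes "g \<in> \<alpha>" "J_hi i < g" "g < J_lo (Suc i)" "Suc i < k"
  shows False
  using gap_point_left_bound[OF assms(1-3) Suc_lessD[OF assms(4)]] gap_point_right_bound[OF assms]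
    J_lo_Suc[of i] J_len_pos[of i] by linarith

lemma tail_pt_voronoi:
  assumes g: "g \<in> \<alpha>" "g < tail_pt" and next_pt: "\<And>b. b \<in> \<alpha> \<Longrightarrow> g < b \<Longrightarrow> b = tail_pt"
  shows "x \<in> voronoi tail_pt \<longleftrightarrow> (g + tail_pt)/2 < x"
proof -
  have below: "b \<le> g" if "b \<in> \<alpha> - {tail_pt}" for b
    using next_pt[of b] that by force
  show ?thesis
  proof
    assume "x \<in> voronoi tail_pt"
    thus "(g + tail_pt)/2 < x" using g unfolding voronoi_iff by (auto simp: add.commute)
  next
    assume "(g + tail_pt)/2 < x"
    thus "x \<in> voronoi tail_pt" unfolding voronoi_iff using below g(2) by fastforce
  qed
qed

lemma tail_pt_move_cost_le:
  assumes cell: "\<And>x. x \<in> voronoi tail_pt \<longleftrightarrow> B < x" and B: "J_lo k \<le> B" "B \<le> J_hi k"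
  shows "cost (insert c' (\<alpha> - {tail_pt})) \<le> cost \<alpha>
           + weight (Suc k) * (sq_integral B (J_hi k) c' - sq_integral B (J_hi k) tail_pt)
           + tail_cost (Suc k) c' - tail_cost (Suc k) tail_pt"
proof -
  let ?\<beta> = "insert c' (\<alpha> - {tail_pt})"
  let ?w = "\<lambda>A i. weight (Suc i) * cell_err A (Suc i)"
  have \<beta>: "finite ?\<beta>" "?\<beta> \<noteq> {}" using finite_alpha by auto
  note move = nearest_sqdist_move[OF tail_pt_mem(1)]
  have "cell_err ?\<beta> (Suc i) \<le> cell_err \<alpha> (Suc i)" if "i < k" for i
  proof (rule cell_err_mono[OF finite_alpha alpha_nonempty \<beta>])
    fix x assume "x \<in> J (Suc i)"
    hence "x \<le> J_hi (k - 1)" using mem_J_le_J_hi that by simp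
    hence "x < B" using J_lo_k J_len_pos[of "k - 1"] B by linarith
    thus "nearest_sqdist ?\<beta> x \<le> nearest_sqdist \<alpha> x" using move(1) cell by auto
  qed
  hence head: "(\<Sum>i<k. ?w ?\<beta> i) \<le> (\<Sum>i<k. ?w \<alpha> i)"
    by (intro sum_mono mult_left_mono weight_nonneg) auto
  have "cell_err ?\<beta> (Suc k) \<le> cell_err \<alpha> (Suc k) + integral {B..J_hi k} (\<lambda>x. (x - c')\<^sup>2 - (x - tail_pt)\<^sup>2)"
    unfolding cell_err_def J_Suc_eq using B \<beta> finite_alpha alpha_nonempty move cell
    by (intro integral_le_plus_piece continuous_on_nearest_sqdist continuous_intros) force+
  also have "integral {B..J_hi k} (\<lambda>x. (x - c')\<^sup>2 - (x - tail_pt)\<^sup>2)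
      = sq_integral B (J_hi k) c' - sq_integral B (J_hi k) tail_pt"
    using B by (subst integral_diff) (auto intro!: integrable_continuous_real continuous_intros
        simp: integral_sq)
  finally have "?w ?\<beta> k \<le> weight (Suc k) * (cell_err \<alpha> (Suc k)
      + (sq_integral B (J_hi k) c' - sq_integral B (J_hi k) tail_pt))"
    by (rule mult_left_mono[OF _ weight_nonneg])
  hence cell_k: "?w ?\<beta> k \<le> ?w \<alpha> k
      + weight (Suc k) * (sq_integral B (J_hi k) c' - sq_integral B (J_hi k) tail_pt)"
    by (simp add: distrib_left)
  have "x \<in> voronoi tail_pt" if "x \<in> J (Suc (j + Suc k))" for j x
  proof -
    have "J_lo (Suc k) \<le> x" using mem_J_ge_J_lo[OF that] by simp
    thus ?thesis using J_lo_Suc[of k] J_len_pos[of k] B cell by simp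
  qed
  hence tail_\<alpha>: "cost_from \<alpha> (Suc k) = tail_cost (Suc k) tail_pt"
    using move(2) by (intro cost_from_eq_tail_cost finite_alpha alpha_nonempty) blast
  have tail_\<beta>: "cost_from ?\<beta> (Suc k) \<le> tail_cost (Suc k) c'"
    using move(3) by (intro cost_from_le_tail_cost \<beta>) blast
  show ?thesis
    using cost_split[OF \<beta>, of "Suc k"] cost_split[OF finite_alpha alpha_nonempty, of "Suc k"]
      head cell_k tail_\<alpha> tail_\<beta> by simp
qed

lemma no_point_in_last_gap:
  assumes g0: "g0 \<in> \<alpha>" "J_hi (k - 1) < g0" "g0 < J_lo k"
  shows False
proof -
  define g where "g = Max {b \<in> \<alpha>. b < J_lo k}"
  have fin: "finite {b \<in> \<alpha>. b < J_lo k}" using finite_alpha by simp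
  have "g \<in> {b \<in> \<alpha>. b < J_lo k}" unfolding g_def using fin g0 by (intro Max_in) auto
  hence g: "g \<in> \<alpha>" "g < J_lo k" by auto
  have g_max: "\<And>b. b \<in> \<alpha> \<Longrightarrow> b < J_lo k \<Longrightarrow> b \<le> g"
    unfolding g_def using fin by (intro Max_ge) auto
  have gap: "J_hi (k - 1) < g" "g < J_lo (Suc (k - 1))" using g(2) g_max[OF g0(1,3)] g0 k_pos by auto
  have next_pt: "b = tail_pt" if "b \<in> \<alpha>" "g < b" for b
    using tail_pt_unique[OF that(1)] g_max[OF that(1)] points_le_1[OF that(1)] that(2) by force
  have g_c: "g < tail_pt" using g(2) tail_pt_mem by linarith
  define u where "u = J_len k"
  define t where "t = (g + tail_pt)/2 - J_lo k"
  define c' where "c' = J_lo k + 2*t + 3/2 * u"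
  have t_pos: "0 < t" using gap_point_voronoi_ends(2)[OF g(1) gap] g_c tail_pt_mem(1) k_pos
    unfolding t_def voronoi_iff by auto
  have "g < J_hi (k - 1) + J_len (k - 1) / 2"
    using gap_point_left_bound[OF g(1) gap] k_pos by simp
  moreover have "tail_pt - c' = J_lo k - g - 3/2 * u" unfolding c'_def t_def by (simp add: field_simps)
  ultimately have e_pos: "0 < tail_pt - c'" using J_lo_k J_len_k unfolding u_def by linarith
  have t_less: "t < 3/4 * u"
    using e_pos tail_pt_mem(3) one_minus_J_lo[of k] unfolding c'_def u_def by linarith
  have cell: "x \<in> voronoi tail_pt \<longleftrightarrow> J_lo k + t < x" for x
    using tail_pt_voronoi[OF g(1) g_c next_pt] unfolding t_def by simp
  have B: "J_lo k \<le> J_lo k + t" "J_lo k + t \<le> J_hi k"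
    using t_pos t_less J_hi_eq[of k] J_len_pos[of k] unfolding u_def by linarith+
  have c_eq: "tail_pt = c' + (tail_pt - c')" by simp
  have "cost (insert c' (\<alpha> - {tail_pt})) \<le> cost \<alpha>
      + weight (Suc k) * (sq_integral (J_lo k + t) (J_hi k) c' - sq_integral (J_lo k + t) (J_hi k) tail_pt)
      + tail_cost (Suc k) c' - tail_cost (Suc k) tail_pt"
    by (rule tail_pt_move_cost_le[OF cell B])
  moreover have "weight (Suc k) * (sq_integral (J_lo k + t) (J_hi k) c' - sq_integral (J_lo k + t) (J_hi k) tail_pt)
      + tail_cost (Suc k) c' - tail_cost (Suc k) tail_pt < 0"
    using tail_pt_shift_gain[OF t_pos _ e_pos, of k] t_less c_eq unfolding c'_def u_def by metis
  ultimately have "cost (insert c' (\<alpha> - {tail_pt})) < cost \<alpha>" by linarith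
  moreover have "finite (insert c' (\<alpha> - {tail_pt}))" using finite_alpha by simp
  ultimately show False using not_cost_less card_move_le[OF tail_pt_mem(1)] by blast
qed

lemma point_cases: "a \<in> \<alpha> \<Longrightarrow> (\<exists>i<k. a \<in> J (Suc i)) \<or> a = tail_pt"
proof -
  assume a: "a \<in> \<alpha>"
  show ?thesis
  proof (cases "J_lo k \<le> a")
    case True thus ?thesis using tail_pt_unique[OF a] points_le_1[OF a] by blast
  next
    case False
    then obtain i where i: "i < k" "J_lo i \<le> a" "a < J_lo (Suc i)"
      using J_lo_bracket points_nonneg[OF a] by (meson not_le)
    consider "a \<le> J_hi i" | "J_hi i < a" "Suc i < k" | "J_hi i < a" "i = k - 1" using i(1) by linarith
    thus ?thesis
    proof cases
      case 1 thus ?thesis using i J_Suc_eq by auto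
    next
      case 2 thus ?thesis using no_point_in_inner_gap[OF a _ i(3)] by blast
    next
      case 3 thus ?thesis using no_point_in_last_gap[OF a] i k_pos by auto
    qed
  qed
qed

lemma tail_pt_notin_J: "i < k \<Longrightarrow> tail_pt \<notin> J (Suc i)"
  using mem_J_le_J_hi[of tail_pt i "k - 1"] tail_pt_mem J_lo_k J_len_pos[of "k - 1"] by fastforce

lemma blocks_disjoint: "i \<noteq> i' \<Longrightarrow> (\<alpha> \<inter> J (Suc i)) \<inter> (\<alpha> \<inter> J (Suc i')) = {}"
  using J_disjoint[of "Suc i" "Suc i'"] by auto

definition block_card :: "nat \<Rightarrow> nat" where
  "block_card i = card (\<alpha> \<inter> J (Suc i))"

lemma finite_block: "finite (\<alpha> \<inter> J (Suc i))"
  using finite_alpha by simp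

lemma block_nonempty: "i < k \<Longrightarrow> \<alpha> \<inter> J (Suc i) \<noteq> {}"
  using exists_point_in_J by blast

lemma block_card_pos: "i < k \<Longrightarrow> 1 \<le> block_card i"
  unfolding block_card_def using finite_block block_nonempty
  by (metis card_0_eq less_one not_le)

text \<open>Points of other blocks and the tail point are at least J_len i away from J (Suc i),
  hence never closer than a point of the block itself.\<close>

lemma nearest_sqdist_block:
  assumes i: "i < k" and x: "x \<in> J (Suc i)"
  shows "nearest_sqdist (\<alpha> \<inter> J (Suc i)) x \<le> nearest_sqdist \<alpha> x"
proof -
  obtain b where b: "b \<in> \<alpha>" "nearest_sqdist \<alpha> x = (x - b)\<^sup>2"
    using nearest_sqdist_attained[OF finite_alpha alpha_nonempty] by blast
  obtain y where y: "y \<in> \<alpha>" "y \<in> J (Suc i)" using exists_point_in_J[OF i] by blast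
  show ?thesis
  proof (cases "b \<in> J (Suc i)")
    case True thus ?thesis using nearest_sqdist_le[OF finite_block, of b i x] b by auto
  next
    case False
    have x_J: "J_lo i \<le> x" "x \<le> J_hi i" using x J_Suc_eq by auto
    have "J_len i \<le> \<bar>x - b\<bar>"
      using point_cases[OF b(1)]
    proof (elim disjE exE conjE)
      fix i' assume i': "i' < k" "b \<in> J (Suc i')"
      hence "i' < i \<or> i < i'" using False by (metis nat_neq_iff)
      thus ?thesis using J_hi_plus_len_le[of i' i] J_hi_plus_len_le[of i i'] J_len_antimono[of i' i]
        i' x_J J_Suc_eq by fastforce
    qed (use J_hi_plus_len_le[OF i] x_J tail_pt_mem in auto)
    moreover have "\<bar>x - y\<bar> \<le> J_len i" using x y J_Suc_eq J_hi_eq[of i] by auto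
    ultimately show ?thesis
      using sq_le_sq_of_dist nearest_sqdist_le[OF finite_block, of y i x] y b by fastforce
  qed
qed

lemma cell_err_block_ge:
  assumes i: "i < k"
  shows "J_len i ^ 3 / (12 * (real (block_card i))\<^sup>2) \<le> cell_err \<alpha> (Suc i)"
proof -
  have "J_len i ^ 3 / (12 * (real (block_card i))\<^sup>2)
      \<le> integral {J_lo i..J_hi i} (nearest_sqdist (\<alpha> \<inter> J (Suc i)))"
    using quantization_lower_bound[OF finite_block block_nonempty[OF i] order_refl
        less_imp_le[OF J_lo_less_J_hi[of i]]] J_hi_eq[of i] unfolding block_card_def by simp
  also have "\<dots> \<le> cell_err \<alpha> (Suc i)" unfolding cell_err_def J_Suc_eq
    using nearest_sqdist_block[OF i] finite_block block_nonempty[OF i] finite_alpha alpha_nonempty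
    by (intro integral_le integrable_nearest_sqdist) (auto simp: J_Suc_eq)
  finally show ?thesis .
qed

lemma nearest_sqdist_tail:
  assumes i: "k \<le> i" and x: "x \<in> J (Suc i)"
  shows "nearest_sqdist \<alpha> x = (x - tail_pt)\<^sup>2"
proof -
  have x_tail: "J_lo k \<le> x" "x \<le> 1" using mem_J_ge_J_lo[OF x i] x J_Suc_eq J_hi_less_1[of i] by auto
  have "(x - tail_pt)\<^sup>2 \<le> (x - b)\<^sup>2" if b: "b \<in> \<alpha>" for b
  proof (cases "b = tail_pt")
    case False
    then obtain i' where "i' < k" "b \<in> J (Suc i')" using point_cases[OF b] by blast
    hence "b \<le> J_hi (k - 1)" using mem_J_le_J_hi by simp
    hence "3 * J_len k \<le> \<bar>x - b\<bar>" using x_tail J_lo_k J_len_k by auto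
    moreover have "\<bar>x - tail_pt\<bar> \<le> 3 * J_len k"
      using x_tail tail_pt_mem one_minus_J_lo[of k] by auto
    ultimately show ?thesis using sq_le_sq_of_dist by blast
  qed simp
  hence "(x - tail_pt)\<^sup>2 \<le> nearest_sqdist \<alpha> x"
    by (intro nearest_sqdist_greatest finite_alpha alpha_nonempty)
  thus ?thesis using nearest_sqdist_le[OF finite_alpha tail_pt_mem(1), of x] by linarith
qed

lemma cost_from_alpha: "cost_from \<alpha> k = tail_cost k tail_pt"
  by (rule cost_from_eq_tail_cost[OF finite_alpha alpha_nonempty]) (rule nearest_sqdist_tail, auto)

lemma cell_err_le_if_block_kept:
  assumes \<beta>: "finite \<beta>" "\<alpha> \<inter> J (Suc i) \<subseteq> \<beta>" and i: "i < k"
  shows "cell_err \<beta> (Suc i) \<le> cell_err \<alpha> (Suc i)"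
  using nearest_sqdist_antimono[OF \<beta> block_nonempty[OF i]] nearest_sqdist_block[OF i] \<beta> block_nonempty[OF i]
  by (intro cell_err_mono finite_alpha alpha_nonempty) (auto intro: order_trans)

lemma cell_err_le_if_tail_pt_kept:
  assumes \<beta>: "finite \<beta>" "tail_pt \<in> \<beta>" and i: "k \<le> i"
  shows "cell_err \<beta> (Suc i) \<le> cell_err \<alpha> (Suc i)"
  using nearest_sqdist_le[OF \<beta>] nearest_sqdist_tail[OF i] \<beta>
  by (intro cell_err_mono finite_alpha alpha_nonempty) auto

end

section \<open>Sizes of the blocks\<close>

text \<open>J_len i ^ 3 / 12 * refine_gain m is what m + 1 equally spaced points save on
  J (Suc i) compared with m.\<close>

definition refine_gain :: "real \<Rightarrow> real" where
  "refine_gain x = 1/x\<^sup>2 - 1/(x + 1)\<^sup>2"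

lemma divide_cross_le: "0 < b \<Longrightarrow> 0 < d \<Longrightarrow> a * d \<le> c * b \<Longrightarrow> a / b \<le> c / (d::real)"
  by (simp add: field_simps)

lemma divide_cross_less: "0 < b \<Longrightarrow> 0 < d \<Longrightarrow> a * d < c * b \<Longrightarrow> a / b < c / (d::real)"
  by (simp add: field_simps)

lemma refine_gain_eq: "0 < x \<Longrightarrow> refine_gain x = (2*x + 1) / (x\<^sup>2 * (x + 1)\<^sup>2)"
  unfolding refine_gain_def by (simp add: field_simps) (simp add: power2_eq_square algebra_simps)

lemma refine_gain_scaled:
  "0 < x \<Longrightarrow> Y / (12 * x\<^sup>2) - Y / (12 * (x + 1)\<^sup>2) = Y * refine_gain x / 12"
  unfolding refine_gain_def by (simp add: field_simps)

lemma refine_gain_Suc_le: "0 < x \<Longrightarrow> refine_gain (x + 1) \<le> refine_gain x"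
proof -
  assume x: "0 < x"
  have "(2*x + 3) * x\<^sup>2 \<le> (2*x + 1) * (x + 2)\<^sup>2"
  proof -
    have "(2*x + 1) * (x + 2)\<^sup>2 - (2*x + 3) * x\<^sup>2 = 6*x\<^sup>2 + 12*x + 4"
      by (simp add: power2_eq_square algebra_simps)
    thus ?thesis using x by (smt (verit) zero_le_power2)
  qed
  hence "(2*x + 3) * x\<^sup>2 * (x + 1)\<^sup>2 \<le> (2*x + 1) * (x + 2)\<^sup>2 * (x + 1)\<^sup>2"
    by (intro mult_right_mono) auto
  hence "(2*x + 3) / ((x + 1)\<^sup>2 * (x + 2)\<^sup>2) \<le> (2*x + 1) / (x\<^sup>2 * (x + 1)\<^sup>2)"
    using x by (intro divide_cross_le) (auto simp: algebra_simps)
  moreover have "refine_gain (x + 1) = (2*x + 3) / ((x + 1)\<^sup>2 * (x + 2)\<^sup>2)"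
    using refine_gain_eq[of "x + 1"] x by (simp add: algebra_simps)
  ultimately show ?thesis using refine_gain_eq[OF x] by simp
qed

lemma refine_gain_antimono:
  assumes "1 \<le> p" "p \<le> q"
  shows "refine_gain (real q) \<le> refine_gain (real p)"
  using assms(2)
proof (induction q rule: dec_induct)
  case (step q)
  have "refine_gain (real q + 1) \<le> refine_gain (real q)"
    using step assms(1) by (intro refine_gain_Suc_le) simp
  thus ?case using step by (simp add: add.commute)
qed simp

lemma refine_gain_less_18: "1 \<le> y \<Longrightarrow> refine_gain y < 18 * refine_gain (y + 1)"
proof -
  assume y: "1 \<le> y"
  have "(2*y + 1) * (y + 2)\<^sup>2 < 18 * (2*y + 3) * y\<^sup>2"
  proof -
    have "18 * (2*y + 3) * y\<^sup>2 - (2*y + 1) * (y + 2)\<^sup>2 = 34*y^3 + 45*y\<^sup>2 - 12*y - 4"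
      by (simp add: power2_eq_square power3_eq_cube algebra_simps)
    moreover have "y \<le> y\<^sup>2" using mult_left_mono[of 1 y y] y by (simp add: power2_eq_square)
    moreover have "1 \<le> y\<^sup>2" "0 \<le> y^3" using y by (simp_all add: one_le_power)
    ultimately show ?thesis by linarith
  qed
  hence "(2*y + 1) * (y + 2)\<^sup>2 * (y + 1)\<^sup>2 < 18 * (2*y + 3) * y\<^sup>2 * (y + 1)\<^sup>2"
    using y by (intro mult_strict_right_mono) auto
  hence "(2*y + 1) / (y\<^sup>2 * (y + 1)\<^sup>2) < 18 * (2*y + 3) / ((y + 1)\<^sup>2 * (y + 2)\<^sup>2)"
    using y by (intro divide_cross_less) (auto simp: algebra_simps)
  moreover have "refine_gain (y + 1) = (2*y + 3) / ((y + 1)\<^sup>2 * (y + 2)\<^sup>2)"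
    using refine_gain_eq[of "y + 1"] y by (simp add: algebra_simps)
  ultimately show ?thesis using refine_gain_eq y by simp
qed

lemma remove_point_loss_le:
  assumes "2 \<le> m" "0 \<le> Y"
  shows "Y / (12 * (real (m - 1))\<^sup>2) - Y / (12 * (real m)\<^sup>2) \<le> Y / 16"
proof -
  have "refine_gain (real (m - 1)) \<le> refine_gain 1"
    using refine_gain_antimono[of 1 "m - 1"] assms(1) by simp
  hence "Y * refine_gain (real (m - 1)) \<le> Y * (3/4)"
    using assms(2) by (intro mult_left_mono) (simp_all add: refine_gain_def)
  moreover have "real (m - 1) + 1 = real m" using assms(1) by simp
  ultimately show ?thesis using refine_gain_scaled[of "real (m - 1)" Y] assms(1) by simp
qed

text \<open>Moving a point from a block of q points to the preceding block of p \<le> q points,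
  whose weighted error scale is 18 times larger: the gain beats the loss because
  refine_gain (q - 1) < 18 refine_gain q \<le> 18 refine_gain p.\<close>

lemma shift_point_gain:
  assumes pq: "1 \<le> p" "p \<le> q" "2 \<le> q" and Y: "0 < Y"
  shows "Y / (12 * (real (p + 1))\<^sup>2) - Y / (12 * (real p)\<^sup>2)
         + (Y / 18 / (12 * (real (q - 1))\<^sup>2) - Y / 18 / (12 * (real q)\<^sup>2)) < 0"
proof -
  have q: "real (q - 1) + 1 = real q" using pq by simp
  have "refine_gain (real (q - 1)) < 18 * refine_gain (real (q - 1) + 1)"
    using pq by (intro refine_gain_less_18) simp
  hence "refine_gain (real (q - 1)) < 18 * refine_gain (real p)"
    using refine_gain_antimono[OF pq(1,2)] unfolding q by linarith
  hence "Y / 18 * refine_gain (real (q - 1)) < Y * refine_gain (real p)" using Y by simp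
  moreover have "Y / (12 * (real p)\<^sup>2) - Y / (12 * (real (p + 1))\<^sup>2) = Y * refine_gain (real p) / 12"
    using refine_gain_scaled[of "real p" Y] pq by (simp add: add.commute)
  moreover have "Y / 18 / (12 * (real (q - 1))\<^sup>2) - Y / 18 / (12 * (real q)\<^sup>2)
      = Y / 18 * refine_gain (real (q - 1)) / 12"
    using refine_gain_scaled[of "real (q - 1)" "Y / 18"] pq q by simp
  ultimately show ?thesis by linarith
qed

lemma card_Un3_le:
  "card A \<le> a \<Longrightarrow> card B \<le> b \<Longrightarrow> card C \<le> c \<Longrightarrow> card (A \<union> B \<union> C) \<le> a + b + c"
  by (meson add_le_mono card_Un_le order_trans)

lemma pow_18_gap:
  assumes "Suc (Suc i) < k"
  shows "324 * (1/18::real)^k \<le> (1/18)^(Suc i)"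
proof -
  have "(1/18::real)^(k - 2) \<le> (1/18)^(Suc i)" using assms by (intro power_decreasing) auto
  moreover have "k = k - 2 + 2" using assms by simp
  hence "(1/18::real)^k = (1/18)^(k - 2) * (1/18)^2" by (metis power_add)
  ultimately show ?thesis by (simp add: power2_eq_square)
qed

context canonical_optimal
begin

lemma card_replace_le:
  assumes "X \<subseteq> \<alpha>" "finite N" "card N \<le> card X"
  shows "card ((\<alpha> - X) \<union> N) \<le> n"
proof -
  have "card ((\<alpha> - X) \<union> N) \<le> card (\<alpha> - X) + card N" by (rule card_Un_le)
  also have "card (\<alpha> - X) = card \<alpha> - card X"
    using assms(1) finite_alpha by (intro card_Diff_subset) (auto intro: finite_subset)
  finally show ?thesis
    using card_mono[OF finite_alpha assms(1)] assms(3) card_alpha_le by linarith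
qed

lemma weighted_cell_err_block_ge:
  assumes "i < k"
  shows "(1/18)^(Suc i) / (12 * (real (block_card i))\<^sup>2) \<le> weight (Suc i) * cell_err \<alpha> (Suc i)"
proof -
  have "weight (Suc i) * (J_len i ^ 3 / (12 * (real (block_card i))\<^sup>2)) \<le> weight (Suc i) * cell_err \<alpha> (Suc i)"
    using cell_err_block_ge[OF assms] weight_nonneg by (rule mult_left_mono)
  thus ?thesis using weight_J_len_cube[of i] by simp
qed

lemma cost_diff_le:
  assumes \<beta>: "finite \<beta>" "\<beta> \<noteq> {}" and N: "N \<le> k" and I: "I \<subseteq> {..<N}"
    and kept: "\<And>i. i < N \<Longrightarrow> i \<notin> I \<Longrightarrow> \<alpha> \<inter> J (Suc i) \<subseteq> \<beta>"
  shows "cost \<beta> - cost \<alpha> \<le> (\<Sum>i\<in>I. weight (Suc i) * cell_err \<beta> (Suc i) - weight (Suc i) * cell_err \<alpha> (Suc i))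
           + cost_from \<beta> N - cost_from \<alpha> N"
proof -
  define d where "d i = weight (Suc i) * cell_err \<beta> (Suc i) - weight (Suc i) * cell_err \<alpha> (Suc i)" for i
  have "d i \<le> 0" if "i \<in> {..<N} - I" for i
    using cell_err_le_if_block_kept[OF \<beta>(1) kept] that N weight_nonneg
    unfolding d_def by (auto intro: mult_left_mono)
  hence "sum d ({..<N} - I) \<le> 0" by (rule sum_nonpos)
  moreover have "sum d {..<N} = sum d ({..<N} - I) + sum d I"
    using sum.subset_diff[OF I] by simp
  ultimately have "sum d {..<N} \<le> sum d I" by linarith
  moreover have "sum d {..<N} = (\<Sum>i<N. weight (Suc i) * cell_err \<beta> (Suc i))
      - (\<Sum>i<N. weight (Suc i) * cell_err \<alpha> (Suc i))"
    unfolding d_def by (simp add: sum_subtractf)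
  ultimately show ?thesis
    using cost_split[OF \<beta>, of N] cost_split[OF finite_alpha alpha_nonempty, of N]
    unfolding d_def by linarith
qed

text \<open>If the last block had m \<ge> 2 points, a better set would put m - 1 evenly spaced points
  on J k, one at the midpoint of J (k + 1) and one at the optimal single centre of the rest.\<close>

lemma last_block_card: "block_card (k - 1) = 1"
proof (rule ccontr)
  assume ne1: "block_card (k - 1) \<noteq> 1"
  define i0 where "i0 = k - 1"
  define m where "m = block_card i0"
  have i0: "i0 < k" "Suc i0 = k" using k_pos unfolding i0_def by auto
  have m: "2 \<le> m" using block_card_pos[OF i0(1)] ne1 unfolding m_def i0_def by linarith
  define X where "X = insert tail_pt (\<alpha> \<inter> J (Suc i0))"
  define N where "N = uniform_points (J_lo i0) (J_hi i0) (m - 1)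
      \<union> uniform_points (J_lo k) (J_hi k) 1 \<union> {1 - (1/3)^(Suc k)/2}"
  define \<beta> where "\<beta> = (\<alpha> - X) \<union> N"
  have \<beta>: "finite \<beta>" "\<beta> \<noteq> {}" unfolding \<beta>_def N_def using finite_alpha finite_uniform_points by auto
  have tail_pts: "uniform_points (J_lo k) (J_hi k) 1 \<subseteq> \<beta>" "1 - (1/3)^(Suc k)/2 \<in> \<beta>"
    unfolding \<beta>_def N_def by auto
  have "card X = m + 1" unfolding X_def m_def block_card_def
    using tail_pt_notin_J[OF i0(1)] finite_block by simp
  moreover have "card N \<le> (m - 1) + 1 + 1"
    unfolding N_def by (rule card_Un3_le) (simp_all add: card_uniform_points_le)
  ultimately have card_\<beta>: "card \<beta> \<le> n" unfolding \<beta>_def using m finite_uniform_points tail_pt_mem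
    by (intro card_replace_le) (auto simp: X_def N_def)
  define Y :: real where "Y = (1/18)^k"
  have "cost \<beta> - cost \<alpha> \<le> weight (Suc i0) * cell_err \<beta> (Suc i0) - weight (Suc i0) * cell_err \<alpha> (Suc i0)
      + cost_from \<beta> k - cost_from \<alpha> k"
    using cost_diff_le[OF \<beta> order_refl, of "{i0}"] i0 blocks_disjoint tail_pt_notin_J
    unfolding \<beta>_def X_def by auto
  moreover have "uniform_points (J_lo i0) (J_hi i0) (m - 1) \<subseteq> \<beta>" unfolding \<beta>_def N_def by blast
  hence "weight (Suc i0) * cell_err \<beta> (Suc i0) \<le> (1/18)^(Suc i0) / (12 * (real (m - 1))\<^sup>2)"
    using m by (intro weighted_cell_err_uniform_le[OF \<beta>(1)]) auto
  hence "weight (Suc i0) * cell_err \<beta> (Suc i0) \<le> Y / (12 * (real (m - 1))\<^sup>2)"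
    unfolding Y_def i0(2) .
  moreover have "Y / (12 * (real m)\<^sup>2) \<le> weight (Suc i0) * cell_err \<alpha> (Suc i0)"
    using weighted_cell_err_block_ge[OF i0(1)] i0(2) unfolding m_def Y_def by simp
  moreover have "Y / (12 * (real (m - 1))\<^sup>2) - Y / (12 * (real m)\<^sup>2) \<le> Y / 16"
    using m by (intro remove_point_loss_le) (simp_all add: Y_def)
  moreover have "cost_from \<beta> k \<le> Y / 216 + 25/204 * (Y / 18)"
    using cost_from_le_midpoint_and_tail[OF \<beta> tail_pts] unfolding Y_def by simp
  moreover have "25/204 * Y \<le> cost_from \<alpha> k"
    unfolding cost_from_alpha Y_def by (rule tail_cost_ge)
  moreover have "0 < Y" unfolding Y_def by simp
  ultimately have "cost \<beta> < cost \<alpha>" by linarith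
  thus False using not_cost_less[OF \<beta> card_\<beta>] by blast
qed

lemma cost_from_alpha_last_ge: "(1/18)^k / 12 + 25/204 * (1/18)^k \<le> cost_from \<alpha> (k - 1)"
proof -
  have k: "Suc (k - 1) = k" using k_pos by simp
  have "(1/18)^k / 12 \<le> weight k * cell_err \<alpha> k"
    using weighted_cell_err_block_ge[of "k - 1"] last_block_card k_pos k by simp
  thus ?thesis using cost_from_Suc[OF finite_alpha alpha_nonempty, of "k - 1"] cost_from_alpha
      tail_cost_ge[of k tail_pt] k by simp
qed

text \<open>If block i + 1 had at least two points and no fewer than block i, moving one of them to
  block i and spacing both blocks evenly would lower the cost.\<close>

lemma block_card_less_of_two_le:
  assumes i: "Suc (Suc i) < k" and q: "2 \<le> block_card (Suc i)"
  shows "block_card (Suc i) < block_card i"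
proof (rule ccontr)
  assume ge: "\<not> block_card (Suc i) < block_card i"
  define p where "p = block_card i"
  define q where "q = block_card (Suc i)"
  have pq: "1 \<le> p" "p \<le> q" "2 \<le> q" using block_card_pos[of i] i q ge
    unfolding p_def q_def by auto
  define X where "X = (\<alpha> \<inter> J (Suc i)) \<union> (\<alpha> \<inter> J (Suc (Suc i)))"
  define N where "N = uniform_points (J_lo i) (J_hi i) (p + 1) \<union> uniform_points (J_lo (Suc i)) (J_hi (Suc i)) (q - 1)"
  define \<beta> where "\<beta> = (\<alpha> - X) \<union> N"
  have \<beta>: "finite \<beta>" "\<beta> \<noteq> {}"
    unfolding \<beta>_def N_def using finite_alpha finite_uniform_points uniform_points_nonempty[of "p + 1"] by auto
  have "card X = p + q" unfolding X_def p_def q_def block_card_def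
    using blocks_disjoint[of i "Suc i"] finite_block by (simp add: card_Un_disjoint)
  moreover have "card N \<le> (p + 1) + (q - 1)" unfolding N_def
    using card_Un_le card_uniform_points_le add_le_mono order_trans by metis
  ultimately have card_\<beta>: "card \<beta> \<le> n" unfolding \<beta>_def using pq finite_uniform_points
    by (intro card_replace_le) (auto simp: X_def N_def)
  have tail: "cost_from \<beta> k \<le> cost_from \<alpha> k"
  proof (rule cost_from_mono[OF finite_alpha alpha_nonempty \<beta>])
    have "tail_pt \<in> \<beta>" unfolding \<beta>_def X_def using tail_pt_mem tail_pt_notin_J i by auto
    thus "\<And>j. cell_err \<beta> (Suc (j + k)) \<le> cell_err \<alpha> (Suc (j + k))"
      using cell_err_le_if_tail_pt_kept[OF \<beta>(1)] by simp
  qed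
  have "cost \<beta> - cost \<alpha> \<le> (\<Sum>i'\<in>{i, Suc i}. weight (Suc i') * cell_err \<beta> (Suc i') - weight (Suc i') * cell_err \<alpha> (Suc i'))
      + cost_from \<beta> k - cost_from \<alpha> k"
  proof (rule cost_diff_le[OF \<beta>])
    show "\<alpha> \<inter> J (Suc i') \<subseteq> \<beta>" if "i' < k" "i' \<notin> {i, Suc i}" for i'
      using that blocks_disjoint[of i' i] blocks_disjoint[of i' "Suc i"] unfolding \<beta>_def X_def by auto
  qed (use i in auto)
  hence diff: "cost \<beta> - cost \<alpha> \<le> weight (Suc i) * cell_err \<beta> (Suc i) - weight (Suc i) * cell_err \<alpha> (Suc i)
      + (weight (Suc (Suc i)) * cell_err \<beta> (Suc (Suc i)) - weight (Suc (Suc i)) * cell_err \<alpha> (Suc (Suc i)))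
      + cost_from \<beta> k - cost_from \<alpha> k" by simp
  define Y :: real where "Y = (1/18)^(Suc i)"
  have Y18: "(1/18)^(Suc (Suc i)) = Y / 18" by (simp add: Y_def)
  have sub: "uniform_points (J_lo i) (J_hi i) (p + 1) \<subseteq> \<beta>"
    "uniform_points (J_lo (Suc i)) (J_hi (Suc i)) (q - 1) \<subseteq> \<beta>" unfolding \<beta>_def N_def by auto
  have "weight (Suc i) * cell_err \<beta> (Suc i) \<le> Y / (12 * (real (p + 1))\<^sup>2)"
    unfolding Y_def by (rule weighted_cell_err_uniform_le[OF \<beta>(1) sub(1)]) simp
  moreover have "weight (Suc (Suc i)) * cell_err \<beta> (Suc (Suc i)) \<le> Y / 18 / (12 * (real (q - 1))\<^sup>2)"
    unfolding Y18[symmetric] by (rule weighted_cell_err_uniform_le[OF \<beta>(1) sub(2)]) (use pq in simp)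
  moreover have "Y / (12 * (real p)\<^sup>2) \<le> weight (Suc i) * cell_err \<alpha> (Suc i)"
    using weighted_cell_err_block_ge[of i] i unfolding p_def Y_def by simp
  moreover have "Y / 18 / (12 * (real q)\<^sup>2) \<le> weight (Suc (Suc i)) * cell_err \<alpha> (Suc (Suc i))"
    using weighted_cell_err_block_ge[of "Suc i"] i unfolding q_def Y18 by simp
  moreover have "Y / (12 * (real (p + 1))\<^sup>2) - Y / (12 * (real p)\<^sup>2)
      + (Y / 18 / (12 * (real (q - 1))\<^sup>2) - Y / 18 / (12 * (real q)\<^sup>2)) < 0"
    using pq by (intro shift_point_gain) (simp_all add: Y_def)
  ultimately have "cost \<beta> < cost \<alpha>" using diff tail by linarith
  thus False using not_cost_less[OF \<beta> card_\<beta>] by blast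
qed

text \<open>If an inner block i had a single point, that point, the single point of the last
  block and the tail point could be replaced by two evenly spaced points on J (Suc i) and the
  optimal single centre of everything from J k on.\<close>

lemma inner_block_card_gt_1:
  assumes i: "Suc (Suc i) < k"
  shows "1 < block_card i"
proof (rule ccontr)
  assume "\<not> 1 < block_card i"
  hence one: "block_card i = 1" using block_card_pos[of i] i by linarith
  define i1 where "i1 = k - 1"
  have i1: "i < i1" "i1 < k" "Suc i1 = k" using i unfolding i1_def by auto
  define X where "X = insert tail_pt ((\<alpha> \<inter> J (Suc i)) \<union> (\<alpha> \<inter> J (Suc i1)))"
  define N where "N = insert (1 - (1/3)^i1/2) (uniform_points (J_lo i) (J_hi i) 2)"
  define \<beta> where "\<beta> = (\<alpha> - X) \<union> N"
  have \<beta>: "finite \<beta>" "\<beta> \<noteq> {}" unfolding \<beta>_def N_def using finite_alpha finite_uniform_points by auto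
  have "card ((\<alpha> \<inter> J (Suc i)) \<union> (\<alpha> \<inter> J (Suc i1))) = 2"
    using one last_block_card blocks_disjoint[of i i1] i1 finite_block[of i] finite_block[of i1]
    unfolding block_card_def i1_def[symmetric] by (simp add: card_Un_disjoint)
  hence "card X = 3"
    using tail_pt_notin_J[of i] tail_pt_notin_J[OF i1(2)] i1(2) i finite_block[of i] finite_block[of i1]
    unfolding X_def by simp
  moreover have "card N \<le> 3"
    unfolding N_def using card_uniform_points_le[of "J_lo i" "J_hi i" 2]
    by (intro card_insert_le_m1) simp_all
  ultimately have card_\<beta>: "card \<beta> \<le> n" unfolding \<beta>_def using finite_uniform_points tail_pt_mem
    by (intro card_replace_le) (auto simp: X_def N_def)
  have "cost \<beta> - cost \<alpha> \<le> (\<Sum>j\<in>{i}. weight (Suc j) * cell_err \<beta> (Suc j) - weight (Suc j) * cell_err \<alpha> (Suc j))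
      + cost_from \<beta> i1 - cost_from \<alpha> i1"
  proof (rule cost_diff_le[OF \<beta>])
    show "\<alpha> \<inter> J (Suc j) \<subseteq> \<beta>" if "j < i1" "j \<notin> {i}" for j
      using that i1 blocks_disjoint[of j i] blocks_disjoint[of j i1] tail_pt_notin_J[of j]
      unfolding \<beta>_def X_def by auto
  qed (use i1 in auto)
  define Y :: real where "Y = (1/18)^k"
  have "weight (Suc i) * cell_err \<beta> (Suc i) \<le> (1/18)^(Suc i) / 48"
    using weighted_cell_err_uniform_le[OF \<beta>(1), of i 2] unfolding \<beta>_def N_def by auto
  moreover have "(1/18)^(Suc i) / 12 \<le> weight (Suc i) * cell_err \<alpha> (Suc i)"
    using weighted_cell_err_block_ge[of i] one i by simp
  moreover have "324 * Y \<le> (1/18)^(Suc i)" unfolding Y_def using i by (rule pow_18_gap)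
  moreover have "cost_from \<beta> i1 \<le> 25/204 * (18 * Y)"
  proof -
    have "cost_from \<beta> i1 \<le> 25/204 * (1/18)^i1"
      by (rule cost_from_le_tail_min[OF \<beta>(1)]) (simp add: \<beta>_def N_def)
    moreover have "(1/18::real)^i1 = 18 * Y" unfolding Y_def i1(3)[symmetric] by simp
    ultimately show ?thesis by simp
  qed
  moreover have "Y / 12 + 25/204 * Y \<le> cost_from \<alpha> i1"
    unfolding Y_def i1_def by (rule cost_from_alpha_last_ge)
  moreover have "0 < Y" unfolding Y_def by simp
  ultimately have "cost \<beta> < cost \<alpha>" using \<open>cost \<beta> - cost \<alpha> \<le> _\<close> by simp
  thus False using not_cost_less[OF \<beta> card_\<beta>] by blast
qed

lemma block_card_strict_decreasing:
  assumes "Suc (Suc i) < k"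
  shows "block_card (Suc i) < block_card i"
proof (cases "2 \<le> block_card (Suc i)")
  case True thus ?thesis using block_card_less_of_two_le[OF assms] by blast
next
  case False
  hence "block_card (Suc i) = 1" using block_card_pos[of "Suc i"] assms by linarith
  thus ?thesis using inner_block_card_gt_1[OF assms] by simp
qed

end

theorem lemma4p9:
  fixes n k :: nat and \<alpha> :: "real set"
  assumes "n \<ge> 2"
    and "optimal_n_means n \<alpha>"
    and "k \<ge> 1"
    and "\<forall>j\<in>{1..k}. \<alpha> \<inter> J j \<noteq> {}"
    and "card (\<alpha> \<inter> {1 - 1 / 3 ^ k .. 1}) = 1"
    and "k \<ge> 2"
  shows "(\<forall>j. 1 \<le> j \<and> j + 1 < k \<longrightarrow> card (\<alpha> \<inter> J j) > card (\<alpha> \<inter> J (j + 1)))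
       \<and> card (\<alpha> \<inter> J (k - 1)) \<ge> card (\<alpha> \<inter> J k)
       \<and> card (\<alpha> \<inter> J k) = 1"
proof -
  interpret canonical_optimal n k \<alpha> using assms(2-5) by unfold_locales
  have last: "card (\<alpha> \<inter> J k) = 1"
    using last_block_card assms(3) unfolding block_card_def by (simp add: Suc_diff_le)
  have "card (\<alpha> \<inter> J j) > card (\<alpha> \<inter> J (j + 1))" if "1 \<le> j" "j + 1 < k" for j
    using block_card_strict_decreasing[of "j - 1"] that unfolding block_card_def by simp
  moreover have "1 \<le> card (\<alpha> \<inter> J (k - 1))"
    using block_card_pos[of "k - 2"] assms(6) unfolding block_card_def
    by (simp add: Suc_diff_Suc numeral_2_eq_2)
  ultimately show ?thesis using last by auto
qed

end
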